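(* Let $Y_1,Y_2$ be compact, semi-locally simply connected length spaces and let $r=\min\{r(Y_1)/20,\ r(Y_2)/20\}$. If $d_{GH}(Y_1,Y_2)\le r$, then $\pi_1(Y_1)$ is isomorphic to $\pi_1(Y_2)$.
   Context: A space $Y$ is semi-locally simply connected if every point has a neighborhood $U$ such that every loop in $U$ is null-homotopic in $Y$. For a metric space $Y$, $r(Y)$ is the supremum of all $r>0$ such that every closed curve contained in a ball of radius $r$ in $Y$ is null-homotopic in $Y$. $d_{GH}$ is the Gromov–Hausdorff distance. *)

theory Defs
  imports "HOL-Analysis.Analysis" "HOL-Algebra.Group"
begin

definition curve_length :: "(real \<Rightarrow> 'a::metric_space) \<Rightarrow> ereal" where
  "curve_length g =
     (SUP p \<in> {(n::nat, t::nat \<Rightarrow> real). t 0 = 0 \<and> t n = 1 \<and> (\<forall>i<n. t i \<le> t (Suc i))}.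
        ereal (\<Sum>i<fst p. dist (g (snd p i)) (g (snd p (Suc i)))))"

definition length_space :: "'a::metric_space set \<Rightarrow> bool" where
  "length_space S \<longleftrightarrow>
     (\<forall>x\<in>S. \<forall>y\<in>S. ereal (dist x y) =
        (INF g \<in> {g. path g \<and> path_image g \<subseteq> S \<and> pathstart g = x \<and> pathfinish g = y}.
           curve_length g))"

definition semilocally_simply_connected :: "'a::topological_space set \<Rightarrow> bool" where
  "semilocally_simply_connected S \<longleftrightarrow>
     (\<forall>y\<in>S. \<exists>U. openin (top_of_set S) U \<and> y \<in> U \<and>
        (\<forall>g. path g \<and> pathfinish g = pathstart g \<and> path_image g \<subseteq> U
             \<longrightarrow> homotopic_loops S g (\<lambda>t. pathstart g)))"

definition r_of :: "'a::metric_space set \<Rightarrow> ereal" where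
  "r_of S = Sup {ereal r | r. r > 0 \<and>
      (\<forall>x\<in>S. \<forall>g. path g \<and> pathfinish g = pathstart g \<and> path_image g \<subseteq> {z\<in>S. dist x z < r}
          \<longrightarrow> homotopic_loops S g (\<lambda>t. pathstart g))}"

definition hausdorff_dist_wrt :: "('c \<Rightarrow> 'c \<Rightarrow> real) \<Rightarrow> 'c set \<Rightarrow> 'c set \<Rightarrow> real" where
  "hausdorff_dist_wrt d A B =
     max (SUP x\<in>A. INF y\<in>B. d x y) (SUP y\<in>B. INF x\<in>A. d x y)"

definition GH_dist :: "'a::metric_space set \<Rightarrow> 'b::metric_space set \<Rightarrow> real" where
  "GH_dist S T = Inf {hausdorff_dist_wrt d (Inl ` S) (Inr ` T) | d.
      Metric_space (Inl ` S \<union> Inr ` T) d \<and>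
      (\<forall>x\<in>S. \<forall>y\<in>S. d (Inl x) (Inl y) = dist x y) \<and>
      (\<forall>x\<in>T. \<forall>y\<in>T. d (Inr x) (Inr y) = dist x y)}"

definition fundamental_group :: "'a::topological_space set \<Rightarrow> 'a \<Rightarrow> (real \<Rightarrow> 'a) set monoid" where
  "fundamental_group S a =
     \<lparr> carrier = {Collect (homotopic_paths S p) | p.
                    path p \<and> path_image p \<subseteq> S \<and> pathstart p = a \<and> pathfinish p = a},
       mult = (\<lambda>X Y. {r. \<exists>p\<in>X. \<exists>q\<in>Y. homotopic_paths S (p +++ q) r}),
       one = Collect (homotopic_paths S (\<lambda>t. a)) \<rparr>"

end

theory Submission
  imports Defs
begin

text \<open>A correspondence C of small distortion e between X and Y transfers loops. A loop p at a in X
  is cut into n short pieces, the cut points p (i / n) are matched with corresponding points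
  y i of Y, and consecutive points y i are joined by almost shortest paths, which exist
  because Y is a length space: the concatenation is a loop at b in Y, a shadow of p. Any two
  shadows of homotopic loops are homotopic: cut a homotopy into a fine grid and compare the shadows
  of neighbouring rows; each small square between them lies in a ball of radius less than r(Y),
  so it is null-homotopic. Hence shadows induce a homomorphism of fundamental groups. The pieces
  of p in turn form a shadow in X of any shadow of p, so shadows taken in the opposite direction
  give the inverse. A Gromov--Hausdorff distance below r / 20 provides such a correspondence with
  3 e + 4 \<eta> < \<rho> < r(Y), where \<eta> is the slack of the almost shortest paths.\<close>

section \<open>Paths in a set\<close>

definition path_in :: "'a::topological_space set \<Rightarrow> 'a \<Rightarrow> 'a \<Rightarrow> (real \<Rightarrow> 'a) \<Rightarrow> bool" where
  "path_in S x y p \<longleftrightarrow> path p \<and> path_image p \<subseteq> S \<and> pathstart p = x \<and> pathfinish p = y"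

lemma path_in_join: "path_in S x y p \<Longrightarrow> path_in S y z q \<Longrightarrow> path_in S x z (p +++ q)"
  unfolding path_in_def using path_image_join_subset[of p q] by auto

lemma path_in_reversepath: "path_in S x y p \<Longrightarrow> path_in S y x (reversepath p)"
  unfolding path_in_def by auto

lemma path_in_const: "x \<in> S \<Longrightarrow> path_in S x x (\<lambda>t. x)"
  unfolding path_in_def by (auto simp: path_def pathstart_def pathfinish_def path_image_def)

lemma path_in_imp_mem: "path_in S x y p \<Longrightarrow> x \<in> S \<and> y \<in> S"
  unfolding path_in_def by (metis pathstart_in_path_image pathfinish_in_path_image subsetD)

lemma path_in_image: "path_in S x y p \<Longrightarrow> t \<in> {0..1} \<Longrightarrow> p t \<in> S"
  unfolding path_in_def path_image_def by blast

lemma path_in_homotopic: "homotopic_paths S p q \<Longrightarrow> path_in S x y p \<Longrightarrow> path_in S x y q"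
  unfolding path_in_def
  by (metis homotopic_paths_imp_path homotopic_paths_imp_subset
      homotopic_paths_imp_pathstart homotopic_paths_imp_pathfinish)

lemma homotopic_paths_refl_in: "path_in S x y p \<Longrightarrow> homotopic_paths S p p"
  unfolding path_in_def by simp

lemma homotopic_paths_join_in:
  "homotopic_paths S p p' \<Longrightarrow> homotopic_paths S q q' \<Longrightarrow> path_in S x y p \<Longrightarrow> path_in S y z q \<Longrightarrow>
   homotopic_paths S (p +++ q) (p' +++ q')"
  unfolding path_in_def by (intro homotopic_paths_join) auto

lemma homotopic_paths_whisker_left:
  "homotopic_paths S q q' \<Longrightarrow> path_in S x y p \<Longrightarrow> path_in S y z q \<Longrightarrow> homotopic_paths S (p +++ q) (p +++ q')"
  by (rule homotopic_paths_join_in[OF homotopic_paths_refl_in])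

lemma homotopic_paths_whisker_right:
  "homotopic_paths S p p' \<Longrightarrow> path_in S x y p \<Longrightarrow> path_in S y z q \<Longrightarrow> homotopic_paths S (p +++ q) (p' +++ q)"
  by (rule homotopic_paths_join_in[OF _ homotopic_paths_refl_in])

lemma homotopic_paths_assoc_in:
  "path_in S x y p \<Longrightarrow> path_in S y z q \<Longrightarrow> path_in S z w r \<Longrightarrow>
   homotopic_paths S (p +++ (q +++ r)) ((p +++ q) +++ r)"
  unfolding path_in_def by (intro homotopic_paths_assoc) auto

text \<open>The library states the groupoid laws with constant paths only for vector spaces. They hold in
  any topological space, since they can be pulled back from paths in the unit interval.\<close>

lemma homotopic_paths_compose_unit_interval:
  assumes "homotopic_paths {0..1} f g" "path p" "path_image p \<subseteq> S"
  shows "homotopic_paths S (p \<circ> f) (p \<circ> g)"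
proof -
  have "homotopic_paths (p ` {0..1}) (p \<circ> f) (p \<circ> g)"
    using assms(2) by (intro homotopic_paths_continuous_image[OF assms(1)]) (auto simp: path_def)
  then show ?thesis
    using assms(3) homotopic_paths_subset by (fastforce simp: path_image_def)
qed

lemma compose_linepath_unit: "p \<circ> linepath 0 1 = p"
  by (simp add: linepath_def o_def)

lemma compose_linepath_const: "p \<circ> linepath u u = (\<lambda>t. p u)"
  by (simp add: linepath_def o_def algebra_simps)

lemma compose_linepath_reverse: "p \<circ> linepath 1 0 = reversepath p"
  by (simp add: linepath_def reversepath_def o_def)

lemma homotopic_paths_rid_const:
  assumes "path_in S x y p"
  shows "homotopic_paths S (p +++ (\<lambda>t. y)) p"
proof -
  have "homotopic_paths {0..1} (linepath 0 1 +++ linepath 1 1) (linepath (0::real) 1)"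
    using homotopic_paths_rid[of "linepath (0::real) 1" "{0..1}"] by (simp add: closed_segment_eq_real_ivl)
  from homotopic_paths_compose_unit_interval[OF this, of p S] assms show ?thesis
    by (simp add: path_in_def path_compose_join compose_linepath_unit compose_linepath_const pathfinish_def)
qed

lemma homotopic_paths_lid_const:
  assumes "path_in S x y p"
  shows "homotopic_paths S ((\<lambda>t. x) +++ p) p"
proof -
  have "homotopic_paths {0..1} (linepath 0 0 +++ linepath 0 1) (linepath (0::real) 1)"
    using homotopic_paths_lid[of "linepath (0::real) 1" "{0..1}"] by (simp add: closed_segment_eq_real_ivl)
  from homotopic_paths_compose_unit_interval[OF this, of p S] assms show ?thesis
    by (simp add: path_in_def path_compose_join compose_linepath_unit compose_linepath_const pathstart_def)
qed

lemma homotopic_paths_rinv_const: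
  assumes "path_in S x y p"
  shows "homotopic_paths S (p +++ reversepath p) (\<lambda>t. x)"
proof -
  have "homotopic_paths {0..1} (linepath 0 1 +++ reversepath (linepath 0 1)) (linepath (0::real) 0)"
    using homotopic_paths_rinv[of "linepath (0::real) 1" "{0..1}"] by (simp add: closed_segment_eq_real_ivl)
  from homotopic_paths_compose_unit_interval[OF this, of p S] assms show ?thesis
    by (simp add: path_in_def path_compose_join compose_linepath_reverse compose_linepath_unit
        compose_linepath_const pathstart_def)
qed

lemma homotopic_paths_linv_const:
  "path_in S x y p \<Longrightarrow> homotopic_paths S (reversepath p +++ p) (\<lambda>t. y)"
  using homotopic_paths_rinv_const[OF path_in_reversepath] by fastforce

lemma joinpaths_cong_unit_interval:
  assumes "\<And>t. t \<in> {0..1} \<Longrightarrow> p t = p' t" "\<And>t. t \<in> {0..1} \<Longrightarrow> q t = q' t" "t \<in> {0..1}"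
  shows "(p +++ q) t = (p' +++ q') t"
  using assms by (auto simp: joinpaths_def)

lemma homotopic_paths_square_edges:
  "homotopic_paths ({0..1} \<times> {0..1}) (\<lambda>x. (0, x))
     (linepath (0, 0) (1, 0) +++ (linepath (1, 0) (1, 1) +++ linepath (1, 1) (0::real, 1::real)))"
  (is "homotopic_paths ?Q _ ?\<tau>")
proof (rule homotopic_paths_linear)
  have "closed_segment u v \<subseteq> ?Q" if "u \<in> ?Q" "v \<in> ?Q" for u v
    using that by (intro closed_segment_subset convex_Times) auto
  then have seg: "path_image (linepath u v) \<subseteq> ?Q" if "u \<in> ?Q" "v \<in> ?Q" for u v
    using that by simp
  have "path_image ?\<tau> \<subseteq> path_image (linepath (0, 0) (1, 0)) \<union>
      (path_image (linepath (1, 0) (1, 1)) \<union> path_image (linepath (1, 1) (0::real, 1::real)))"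
    using path_image_join_subset by blast
  moreover have "path_image (linepath (0, 0) (1, 0)) \<subseteq> ?Q" "path_image (linepath (1, 0) (1, 1)) \<subseteq> ?Q"
    "path_image (linepath (1, 1) (0, 1)) \<subseteq> ?Q"
    by (rule seg; simp)+
  ultimately have "path_image ?\<tau> \<subseteq> ?Q"
    by blast
  then show "closed_segment (0, t) (?\<tau> t) \<subseteq> ?Q" if "t \<in> {0..1}" for t
    using that by (intro closed_segment_subset convex_Times) (auto simp: path_image_def)
  show "path (\<lambda>x. (0::real, x::real))"
    by (auto simp: path_def intro!: continuous_intros)
  show "path ?\<tau>" "pathstart ?\<tau> = pathstart (\<lambda>x. (0::real, x::real))"
    "pathfinish ?\<tau> = pathfinish (\<lambda>x. (0::real, x::real))"
    by simp_all (simp_all add: pathstart_def pathfinish_def)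
qed

lemma homotopic_loops_imp_homotopic_paths_const:
  assumes "homotopic_loops S p (\<lambda>t. a)"
  shows "homotopic_paths S p (\<lambda>t. pathstart p)"
proof -
  let ?Q = "{0..1} \<times> {0..1} :: (real \<times> real) set"
  obtain h where h: "continuous_on ?Q h" "h \<in> ?Q \<rightarrow> S"
    and h0: "\<And>x. x \<in> {0..1} \<Longrightarrow> h (0, x) = p x" and h1: "\<And>x. x \<in> {0..1} \<Longrightarrow> h (1, x) = a"
    and loop: "\<And>t. t \<in> {0..1} \<Longrightarrow> h (t, 1) = h (t, 0)"
    using assms unfolding homotopic_loops by (auto simp: pathstart_def pathfinish_def)
  have p: "path p" "path_image p \<subseteq> S"
    using homotopic_loops_imp_path[OF assms] homotopic_loops_imp_subset[OF assms] by auto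
  define \<gamma> where "\<gamma> t = h (t, 0)" for t
  have \<gamma>: "path_in S (pathstart p) a \<gamma>"
  proof -
    have "continuous_on {0..1} (h \<circ> (\<lambda>t. (t, 0)))"
      by (intro continuous_on_compose continuous_intros continuous_on_subset[OF h(1)]) auto
    then show ?thesis
      using h(2) h0[of 0] h1[of 0]
      by (auto simp: path_in_def path_def path_image_def pathstart_def pathfinish_def \<gamma>_def o_def)
  qed
  \<comment> \<open>Along the edges of the square other than the left one, h traces \<gamma>, the constant a and \<gamma>
    backwards.\<close>
  define \<tau> where
    "\<tau> = linepath (0, 0) (1, 0) +++ (linepath (1, 0) (1, 1) +++ linepath (1, 1) (0::real, 1::real))"
  have "homotopic_paths ?Q (\<lambda>x. (0, x)) \<tau>"
    unfolding \<tau>_def by (rule homotopic_paths_square_edges)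
  then have "homotopic_paths (h ` ?Q) (h \<circ> (\<lambda>x. (0, x))) (h \<circ> \<tau>)"
    using h(1) by (rule homotopic_paths_continuous_image) auto
  then have "homotopic_paths S (h \<circ> (\<lambda>x. (0, x))) (h \<circ> \<tau>)"
    by (rule homotopic_paths_subset) (use h(2) in blast)
  also have "homotopic_paths S (h \<circ> \<tau>) (\<gamma> +++ ((\<lambda>t. a) +++ reversepath \<gamma>))"
  proof (rule homotopic_paths_eq)
    show "path (h \<circ> \<tau>)" "path_image (h \<circ> \<tau>) \<subseteq> S"
      using calculation by (auto dest: homotopic_paths_imp_path homotopic_paths_imp_subset)
    have "(h \<circ> linepath (0, 0) (1, 0)) t = \<gamma> t" for t
      by (simp add: linepath_def \<gamma>_def)
    moreover have "(h \<circ> linepath (1, 0) (1, 1)) t = a" if "t \<in> {0..1}" for t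
      using h1[OF that] by (simp add: linepath_def)
    moreover have "(h \<circ> linepath (1, 1) (0, 1)) t = reversepath \<gamma> t" if "t \<in> {0..1}" for t
      using loop[of "1 - t"] that by (simp add: linepath_def reversepath_def \<gamma>_def)
    ultimately show "(h \<circ> \<tau>) t = (\<gamma> +++ ((\<lambda>t. a) +++ reversepath \<gamma>)) t" if "t \<in> {0..1}" for t
      unfolding \<tau>_def path_compose_join using that by (intro joinpaths_cong_unit_interval) auto
  qed
  also have "homotopic_paths S (\<gamma> +++ ((\<lambda>t. a) +++ reversepath \<gamma>)) (\<gamma> +++ reversepath \<gamma>)"
  proof (rule homotopic_paths_join_in[OF homotopic_paths_refl_in[OF \<gamma>] _ \<gamma>])
    show "path_in S a (pathstart p) ((\<lambda>t. a) +++ reversepath \<gamma>)"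
      using path_in_imp_mem[OF \<gamma>] by (intro path_in_join[OF path_in_const path_in_reversepath[OF \<gamma>]]) auto
  qed (rule homotopic_paths_lid_const[OF path_in_reversepath[OF \<gamma>]])
  also have "homotopic_paths S (\<gamma> +++ reversepath \<gamma>) (\<lambda>t. pathstart p)"
    using homotopic_paths_rinv_const[OF \<gamma>] .
  finally have "homotopic_paths S (h \<circ> (\<lambda>x. (0, x))) (\<lambda>t. pathstart p)" .
  moreover have "homotopic_paths S p (h \<circ> (\<lambda>x. (0, x)))"
    using p h0 by (intro homotopic_paths_eq) auto
  ultimately show ?thesis
    by (rule homotopic_paths_trans[rotated])
qed

lemma homotopic_paths_loop_parts_const:
  assumes null: "homotopic_loops S (p +++ reversepath q) (\<lambda>t. a)"
    and p: "path_in S x y p" and q: "path_in S x y q"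
  shows "homotopic_paths S p q"
proof -
  have rq: "path_in S y x (reversepath q)"
    using q by (rule path_in_reversepath)
  have "homotopic_paths S p (p +++ (\<lambda>t. y))"
    using homotopic_paths_rid_const[OF p] by (rule homotopic_paths_sym)
  also have "homotopic_paths S (p +++ (\<lambda>t. y)) (p +++ (reversepath q +++ q))"
    using homotopic_paths_sym[OF homotopic_paths_linv_const[OF q]] path_in_const path_in_imp_mem[OF p]
    by (intro homotopic_paths_join_in[OF homotopic_paths_refl_in[OF p] _ p]) auto
  also have "homotopic_paths S (p +++ (reversepath q +++ q)) ((p +++ reversepath q) +++ q)"
    using p rq q by (rule homotopic_paths_assoc_in)
  also have "homotopic_paths S ((p +++ reversepath q) +++ q) ((\<lambda>t. x) +++ q)"
    using homotopic_loops_imp_homotopic_paths_const[OF null] p q path_in_join[OF p rq]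
    by (intro homotopic_paths_join_in[OF _ homotopic_paths_refl_in[OF q]]) (auto simp: path_in_def)
  also have "homotopic_paths S ((\<lambda>t. x) +++ q) q"
    using q by (rule homotopic_paths_lid_const)
  finally show ?thesis .
qed

definition joinpaths_at :: "real \<Rightarrow> (real \<Rightarrow> 'a) \<Rightarrow> (real \<Rightarrow> 'a) \<Rightarrow> real \<Rightarrow> 'a" where
  "joinpaths_at l p q t = (if t \<le> l then p (t / l) else q ((t - l) / (1 - l)))"

lemma homotopic_paths_joinpaths_at:
  assumes l: "0 < l" "l < 1" and p: "path_in S x y p" and q: "path_in S y z q"
  shows "homotopic_paths S (p +++ q) (joinpaths_at l p q)"
proof (rule homotopic_paths_reparametrize)
  let ?f = "\<lambda>t. if t \<le> l then t / (2 * l) else 1/2 + (t - l) / (2 * (1 - l))"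
  show "path (p +++ q)" "path_image (p +++ q) \<subseteq> S"
    using path_in_join[OF p q] by (auto simp: path_in_def)
  have "continuous_on ({0..l} \<union> {l..1}) ?f"
    using l by (intro continuous_on_cases continuous_intros) auto
  moreover have "{0..l} \<union> {l..1} = {0..1::real}"
    using l by auto
  ultimately show "continuous_on {0..1} ?f"
    by simp
  show "?f \<in> {0..1} \<rightarrow> {0..1}"
    using l by (auto simp: field_split_simps)
  show "?f 0 = 0" "?f 1 = 1"
    using l by (auto simp: field_split_simps)
  show "joinpaths_at l p q t = (p +++ q) (?f t)" for t
  proof (cases "t \<le> l")
    case False
    then have "\<not> ?f t \<le> 1/2" "2 * ?f t - 1 = (t - l) / (1 - l)"
      using l by (auto simp: field_split_simps)
    then show ?thesis
      using False by (simp add: joinpaths_at_def joinpaths_def)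
  qed (use l in \<open>auto simp: joinpaths_at_def joinpaths_def field_split_simps\<close>)
qed

lemma joinpaths_at_half: "joinpaths_at (1/2) p q = p +++ q"
  by (simp add: joinpaths_at_def joinpaths_def fun_eq_iff mult.commute)

lemma joinpaths_image_first_half:
  assumes "v \<le> 1/2"
  shows "(p +++ q) ` {u..v} = p ` {2 * u..2 * v}"
proof -
  have "(p +++ q) ` {u..v} = (p \<circ> (\<lambda>t. 2 * t)) ` {u..v}"
    using assms by (intro image_cong) (auto simp: joinpaths_def)
  also have "\<dots> = p ` ((\<lambda>t. 2 * t) ` {u..v})"
    by (rule image_comp[symmetric])
  also have "(\<lambda>t. 2 * t) ` {u..v} = {2 * u..2 * v}"
    by simp
  finally show ?thesis .
qed

lemma joinpaths_image_second_half:
  assumes "pathfinish p = pathstart q" "1/2 \<le> u"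
  shows "(p +++ q) ` {u..v} = q ` {2 * u - 1..2 * v - 1}"
proof -
  have "(p +++ q) t = q (2 * t - 1)" if "1/2 \<le> t" for t
  proof (cases "t = 1/2")
    case True
    show ?thesis
      using assms(1) unfolding True by (simp add: joinpaths_def pathstart_def pathfinish_def)
  qed (use that in \<open>simp add: joinpaths_def\<close>)
  then have "(p +++ q) ` {u..v} = (q \<circ> (\<lambda>t. 2 * t - 1)) ` {u..v}"
    using assms(2) by (intro image_cong) auto
  also have "\<dots> = q ` ((\<lambda>t. 2 * t - 1) ` {u..v})"
    by (rule image_comp[symmetric])
  also have "(\<lambda>t. 2 * t - 1) ` {u..v} = {2 * u - 1..2 * v - 1}"
    by (simp add: image_affinity_atLeastAtMost_diff)
  finally show ?thesis .
qed

section \<open>Fundamental groups\<close>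

definition homotopy_class :: "'a::topological_space set \<Rightarrow> (real \<Rightarrow> 'a) \<Rightarrow> (real \<Rightarrow> 'a) set" where
  "homotopy_class S p = Collect (homotopic_paths S p)"

lemma homotopy_class_eq_iff:
  assumes "path_in S x y p" "path_in S x' y' q"
  shows "homotopy_class S p = homotopy_class S q \<longleftrightarrow> homotopic_paths S p q"
proof
  assume "homotopy_class S p = homotopy_class S q"
  moreover have "q \<in> homotopy_class S q"
    using homotopic_paths_refl_in[OF assms(2)] by (simp add: homotopy_class_def)
  ultimately have "q \<in> homotopy_class S p"
    by simp
  then show "homotopic_paths S p q"
    by (simp add: homotopy_class_def)
next
  assume pq: "homotopic_paths S p q"
  have "homotopic_paths S p r \<longleftrightarrow> homotopic_paths S q r" for r
    using homotopic_paths_trans[OF pq] homotopic_paths_trans[OF homotopic_paths_sym[OF pq]] by blast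
  then show "homotopy_class S p = homotopy_class S q"
    by (simp add: homotopy_class_def set_eq_iff)
qed

lemma carrier_fundamental_group:
  "carrier (fundamental_group S x) = {homotopy_class S p | p. path_in S x x p}"
  by (auto simp: fundamental_group_def homotopy_class_def path_in_def)

lemma mult_fundamental_group:
  assumes p: "path_in S x x p" and q: "path_in S x x q"
  shows "homotopy_class S p \<otimes>\<^bsub>fundamental_group S x\<^esub> homotopy_class S q = homotopy_class S (p +++ q)"
proof -
  have "(\<exists>p'. homotopic_paths S p p' \<and> (\<exists>q'. homotopic_paths S q q' \<and> homotopic_paths S (p' +++ q') r))
    \<longleftrightarrow> homotopic_paths S (p +++ q) r" for r
  proof
    assume "\<exists>p'. homotopic_paths S p p' \<and> (\<exists>q'. homotopic_paths S q q' \<and> homotopic_paths S (p' +++ q') r)"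
    then obtain p' q'
      where "homotopic_paths S p p'" "homotopic_paths S q q'" "homotopic_paths S (p' +++ q') r"
      by blast
    then show "homotopic_paths S (p +++ q) r"
      using homotopic_paths_join_in[OF _ _ p q] homotopic_paths_trans by blast
  qed (use homotopic_paths_refl_in[OF p] homotopic_paths_refl_in[OF q] in blast)
  then show ?thesis
    by (simp add: fundamental_group_def homotopy_class_def)
qed

definition induced_class_map ::
    "'a::topological_space set \<Rightarrow> 'a \<Rightarrow> 'b::topological_space set \<Rightarrow> ((real \<Rightarrow> 'a) \<Rightarrow> real \<Rightarrow> 'b) \<Rightarrow>
      (real \<Rightarrow> 'a) set \<Rightarrow> (real \<Rightarrow> 'b) set" where
  "induced_class_map X a Y F c = homotopy_class Y (F (SOME p. path_in X a a p \<and> c = homotopy_class X p))"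

locale loop_map =
  fixes X :: "'a::topological_space set" and a :: 'a and Y :: "'b::topological_space set" and b :: 'b
    and F :: "(real \<Rightarrow> 'a) \<Rightarrow> real \<Rightarrow> 'b"
  assumes F: "\<And>p. path_in X a a p \<Longrightarrow> path_in Y b b (F p)"
    and F_cong: "\<And>p p'. path_in X a a p \<Longrightarrow> path_in X a a p' \<Longrightarrow> homotopic_paths X p p' \<Longrightarrow>
        homotopic_paths Y (F p) (F p')"
    and F_join: "\<And>p p'. path_in X a a p \<Longrightarrow> path_in X a a p' \<Longrightarrow>
        homotopic_paths Y (F (p +++ p')) (F p +++ F p')"
begin

lemma induced_class_map:
  assumes p: "path_in X a a p"
  shows "induced_class_map X a Y F (homotopy_class X p) = homotopy_class Y (F p)"
proof -
  define p' where "p' = (SOME p'. path_in X a a p' \<and> homotopy_class X p = homotopy_class X p')"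
  have "\<exists>p'. path_in X a a p' \<and> homotopy_class X p = homotopy_class X p'"
    using p by blast
  then have "path_in X a a p' \<and> homotopy_class X p = homotopy_class X p'"
    unfolding p'_def by (rule someI_ex)
  then have p': "path_in X a a p'" "homotopy_class X p = homotopy_class X p'"
    by auto
  then have "homotopic_paths Y (F p') (F p)"
    using homotopy_class_eq_iff[OF p p'(1)] by (simp add: F_cong p homotopic_paths_sym)
  then show ?thesis
    unfolding induced_class_map_def p'_def[symmetric]
    by (simp add: homotopy_class_eq_iff[OF F[OF p'(1)] F[OF p]])
qed

lemma induced_class_map_hom:
  "induced_class_map X a Y F \<in> hom (fundamental_group X a) (fundamental_group Y b)"
proof (rule homI)
  let ?h = "induced_class_map X a Y F"
  show "?h x \<in> carrier (fundamental_group Y b)" if "x \<in> carrier (fundamental_group X a)" for x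
    using that induced_class_map F unfolding carrier_fundamental_group by auto
  show "?h (x \<otimes>\<^bsub>fundamental_group X a\<^esub> y) = ?h x \<otimes>\<^bsub>fundamental_group Y b\<^esub> ?h y"
    if xy: "x \<in> carrier (fundamental_group X a)" "y \<in> carrier (fundamental_group X a)" for x y
  proof -
    obtain p q where x: "x = homotopy_class X p" "path_in X a a p"
      and y: "y = homotopy_class X q" "path_in X a a q"
      using xy unfolding carrier_fundamental_group by auto
    have pq: "path_in X a a (p +++ q)"
      using path_in_join[OF x(2) y(2)] .
    have "homotopy_class Y (F (p +++ q)) = homotopy_class Y (F p +++ F q)"
      using homotopy_class_eq_iff[OF F[OF pq] path_in_join[OF F[OF x(2)] F[OF y(2)]]] F_join[OF x(2) y(2)]
      by simp
    then show ?thesis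
      using x y by (simp add: mult_fundamental_group induced_class_map pq F)
  qed
qed

end

lemma fundamental_group_isoI:
  assumes "loop_map X a Y b F"
    and G: "\<And>q. path_in Y b b q \<Longrightarrow> path_in X a a (G q)"
    and G_cong: "\<And>q q'. path_in Y b b q \<Longrightarrow> path_in Y b b q' \<Longrightarrow> homotopic_paths Y q q' \<Longrightarrow>
        homotopic_paths X (G q) (G q')"
    and GF: "\<And>p. path_in X a a p \<Longrightarrow> homotopic_paths X (G (F p)) p"
    and FG: "\<And>q. path_in Y b b q \<Longrightarrow> homotopic_paths Y (F (G q)) q"
  shows "fundamental_group X a \<cong> fundamental_group Y b"
proof -
  interpret loop_map X a Y b F
    by fact
  let ?h = "induced_class_map X a Y F"
  have "bij_betw ?h (carrier (fundamental_group X a)) (carrier (fundamental_group Y b))"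
  proof (rule bij_betw_imageI)
    show "inj_on ?h (carrier (fundamental_group X a))"
    proof (rule inj_onI)
      fix x y
      assume "x \<in> carrier (fundamental_group X a)" "y \<in> carrier (fundamental_group X a)" "?h x = ?h y"
      then obtain p q where x: "x = homotopy_class X p" "path_in X a a p"
        and y: "y = homotopy_class X q" "path_in X a a q"
        and "homotopy_class Y (F p) = homotopy_class Y (F q)"
        unfolding carrier_fundamental_group using induced_class_map by auto
      then have "homotopic_paths X (G (F p)) (G (F q))"
        using homotopy_class_eq_iff[OF F[OF x(2)] F[OF y(2)]] by (simp add: G_cong F)
      then have "homotopic_paths X p q"
        using GF[OF x(2)] GF[OF y(2)] by (meson homotopic_paths_sym homotopic_paths_trans)
      then show "x = y"
        using homotopy_class_eq_iff[OF x(2) y(2)] x y by simp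
    qed
    have "homotopy_class Y q \<in> ?h ` carrier (fundamental_group X a)" if q: "path_in Y b b q" for q
    proof -
      have "?h (homotopy_class X (G q)) = homotopy_class Y q"
        using induced_class_map[OF G[OF q]] homotopy_class_eq_iff[OF F[OF G[OF q]] q] FG[OF q] by simp
      moreover have "homotopy_class X (G q) \<in> carrier (fundamental_group X a)"
        using G[OF q] unfolding carrier_fundamental_group by blast
      ultimately show ?thesis
        by (metis image_eqI)
    qed
    then show "?h ` carrier (fundamental_group X a) = carrier (fundamental_group Y b)"
      using induced_class_map F unfolding carrier_fundamental_group by auto
  qed
  then show ?thesis
    using induced_class_map_hom unfolding is_iso_def iso_def by blast
qed
lemma homotopic_paths_conjugate_join:
  assumes r: "path_in S x y r" and r': "path_in S y x r'" and rr': "homotopic_paths S (r +++ r') (\<lambda>t. x)"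
    and p: "path_in S x x p" and p': "path_in S x x p'"
  shows "homotopic_paths S (r' +++ ((p +++ p') +++ r)) ((r' +++ (p +++ r)) +++ (r' +++ (p' +++ r)))"
proof -
  have q: "path_in S x y (p' +++ r)"
    using p' r by (rule path_in_join)
  have x: "x \<in> S"
    using path_in_imp_mem[OF r] by blast
  have "homotopic_paths S (p' +++ r) ((\<lambda>t. x) +++ (p' +++ r))"
    using homotopic_paths_lid_const[OF q] by (rule homotopic_paths_sym)
  also have "homotopic_paths S \<dots> ((r +++ r') +++ (p' +++ r))"
    using homotopic_paths_sym[OF rr'] path_in_const[OF x] q by (rule homotopic_paths_whisker_right)
  also have "homotopic_paths S \<dots> (r +++ (r' +++ (p' +++ r)))"
    using homotopic_paths_assoc_in[OF r r' q] by (rule homotopic_paths_sym)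
  finally have "homotopic_paths S (p +++ (p' +++ r)) (p +++ (r +++ (r' +++ (p' +++ r))))"
    using p q by (rule homotopic_paths_whisker_left)
  also have "homotopic_paths S \<dots> ((p +++ r) +++ (r' +++ (p' +++ r)))"
    using p r path_in_join[OF r' q] by (rule homotopic_paths_assoc_in)
  finally have "homotopic_paths S ((p +++ p') +++ r) ((p +++ r) +++ (r' +++ (p' +++ r)))"
    using homotopic_paths_sym[OF homotopic_paths_assoc_in[OF p p' r]] homotopic_paths_trans by blast
  then have "homotopic_paths S (r' +++ ((p +++ p') +++ r)) (r' +++ ((p +++ r) +++ (r' +++ (p' +++ r))))"
    using r' path_in_join[OF path_in_join[OF p p'] r] by (rule homotopic_paths_whisker_left)
  also have "homotopic_paths S \<dots> ((r' +++ (p +++ r)) +++ (r' +++ (p' +++ r)))"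
    using r' path_in_join[OF p r] path_in_join[OF r' q] by (rule homotopic_paths_assoc_in)
  finally show ?thesis .
qed

lemma homotopic_paths_conjugate_cancel:
  assumes r: "path_in S x y r" and r': "path_in S y x r'" and rr': "homotopic_paths S (r +++ r') (\<lambda>t. x)"
    and p: "path_in S x x p"
  shows "homotopic_paths S (r +++ ((r' +++ (p +++ r)) +++ r')) p"
proof -
  have pr: "path_in S x y (p +++ r)"
    using p r by (rule path_in_join)
  have prr: "path_in S x x ((p +++ r) +++ r')"
    using pr r' by (rule path_in_join)
  have "homotopic_paths S (r +++ ((r' +++ (p +++ r)) +++ r')) (r +++ (r' +++ ((p +++ r) +++ r')))"
    using homotopic_paths_sym[OF homotopic_paths_assoc_in[OF r' pr r']] r
      path_in_join[OF path_in_join[OF r' pr] r']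
    by (rule homotopic_paths_whisker_left)
  also have "homotopic_paths S \<dots> ((r +++ r') +++ ((p +++ r) +++ r'))"
    using r r' prr by (rule homotopic_paths_assoc_in)
  also have "homotopic_paths S \<dots> ((\<lambda>t. x) +++ ((p +++ r) +++ r'))"
    using rr' path_in_join[OF r r'] prr by (rule homotopic_paths_whisker_right)
  also have "homotopic_paths S \<dots> ((p +++ r) +++ r')"
    using prr by (rule homotopic_paths_lid_const)
  also have "homotopic_paths S \<dots> (p +++ (r +++ r'))"
    using homotopic_paths_assoc_in[OF p r r'] by (rule homotopic_paths_sym)
  also have "homotopic_paths S \<dots> (p +++ (\<lambda>t. x))"
    using rr' p path_in_join[OF r r'] by (rule homotopic_paths_whisker_left)
  also have "homotopic_paths S \<dots> p"
    using p by (rule homotopic_paths_rid_const)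
  finally show ?thesis .
qed

lemma fundamental_group_change_basepoint:
  assumes c: "path_in S a a' c"
  shows "fundamental_group S a \<cong> fundamental_group S a'"
proof -
  have c': "path_in S a' a (reversepath c)"
    using c by (rule path_in_reversepath)
  have cc': "homotopic_paths S (c +++ reversepath c) (\<lambda>t. a)"
    using c by (rule homotopic_paths_rinv_const)
  have c'c: "homotopic_paths S (reversepath c +++ c) (\<lambda>t. a')"
    using c by (rule homotopic_paths_linv_const)
  have conj_cong: "homotopic_paths S (r' +++ (p +++ r)) (r' +++ (p' +++ r))"
    if "path_in S x y r" "path_in S y x r'" "path_in S x x p" "path_in S x x p'" "homotopic_paths S p p'"
    for x y r r' p p'
    using that by (meson homotopic_paths_whisker_left homotopic_paths_whisker_right path_in_join)
  have "loop_map S a S a' (\<lambda>p. reversepath c +++ (p +++ c))"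
  proof
    show "path_in S a' a' (reversepath c +++ (p +++ c))" if "path_in S a a p" for p
      using c' that c by (intro path_in_join)
  qed (use c c' cc' in \<open>auto intro: conj_cong homotopic_paths_conjugate_join\<close>)
  then show ?thesis
  proof (rule fundamental_group_isoI[where G = "\<lambda>q. c +++ (q +++ reversepath c)"])
    show "path_in S a a (c +++ (q +++ reversepath c))" if "path_in S a' a' q" for q
      using c that c' by (intro path_in_join)
  qed (use c c' cc' c'c in \<open>auto intro: conj_cong homotopic_paths_conjugate_cancel\<close>)
qed

section \<open>Uniform concatenation of chains of paths\<close>

lemma fraction_in_unit_interval: "i \<le> n \<Longrightarrow> 0 < n \<Longrightarrow> real i / real n \<in> {0..1}"
  by (simp add: divide_le_eq_1)

lemma piece_subset_unit_interval:
  assumes "i < n"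
  shows "{real i / real n..real (Suc i) / real n} \<subseteq> {0..1}"
proof -
  have "real (Suc i) \<le> real n"
    using assms by (simp only: of_nat_le_iff Suc_le_eq)
  then show ?thesis
    by (simp add: divide_le_eq_1)
qed

lemma piece_mem_unit_interval:
  "i < n \<Longrightarrow> t \<in> {real i / real n..real (Suc i) / real n} \<Longrightarrow> t \<in> {0..1}"
  using subsetD[OF piece_subset_unit_interval] .

lemma unit_interval_piece:
  assumes "0 < n" "t \<in> {0..1}"
  obtains k s where "k < n" "s \<in> {0..1}" "t = (real k + s) / real n"
proof (cases "t = 1")
  case True
  then show ?thesis
    using assms that[of "n - 1" 1] by (simp add: of_nat_diff)
next
  case False
  define k where "k = nat \<lfloor>real n * t\<rfloor>"
  have "real k \<le> real n * t" "real n * t < real k + 1"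
    using assms by (simp_all add: k_def)
  moreover have "real n * t < real n"
    using assms False by simp
  ultimately have "k < n"
    by linarith
  with \<open>real k \<le> real n * t\<close> \<open>real n * t < real k + 1\<close> show ?thesis
    using assms by (intro that[of k "real n * t - real k"]) (auto simp: field_split_simps)
qed

lemma block_fraction:
  assumes "0 < n" "0 < m" "j \<le> m"
  shows "real (i * m + j) / real (n * m) \<in> {real i / real n..real (Suc i) / real n}"
proof -
  have eq: "real (i * m + j) / real (n * m) = real i / real n + real j / (real n * real m)"
    using assms by (simp add: field_simps)
  have "real j / (real n * real m) \<le> real m / (real n * real m)"
    using assms by (intro divide_right_mono) auto
  also have "\<dots> = 1 / real n"
    using assms by simp
  finally show ?thesis
    unfolding eq by (simp add: add_divide_distrib)
qed

lemma joinpaths_fraction: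
  assumes "pathfinish p = pathstart q" "0 < n"
  shows "(p +++ q) (real i / real (2 * n)) =
    (if i \<le> n then p (real i / real n) else q (real (i - n) / real n))"
proof (cases "i \<le> n")
  case True
  then have "real i / real (2 * n) \<le> 1/2" "2 * (real i / real (2 * n)) = real i / real n"
    using assms(2) by (simp_all add: field_split_simps)
  then show ?thesis
    using True by (simp add: joinpaths_def)
next
  case False
  then have "\<not> real i / real (2 * n) \<le> 1/2" "2 * (real i / real (2 * n)) - 1 = real (i - n) / real n"
    using assms(2) by (simp_all add: field_split_simps of_nat_diff)
  then show ?thesis
    using False by (simp add: joinpaths_def)
qed

lemma joinpaths_piece_image:
  assumes "pathfinish p = pathstart q" "0 < n"
  shows "(p +++ q) ` {real i / real (2 * n)..real (Suc i) / real (2 * n)} =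
    (if i < n then p ` {real i / real n..real (Suc i) / real n}
     else q ` {real (i - n) / real n..real (Suc (i - n)) / real n})"
proof (cases "i < n")
  case True
  then have "real (Suc i) / real (2 * n) \<le> 1/2"
    using assms(2) by (simp add: field_split_simps)
  then have "(p +++ q) ` {real i / real (2 * n)..real (Suc i) / real (2 * n)} =
      p ` {2 * (real i / real (2 * n))..2 * (real (Suc i) / real (2 * n))}"
    by (rule joinpaths_image_first_half)
  moreover have "2 * (real i / real (2 * n)) = real i / real n"
    "2 * (real (Suc i) / real (2 * n)) = real (Suc i) / real n"
    using assms(2) by (simp_all add: field_split_simps del: of_nat_Suc)
  ultimately show ?thesis
    using True by (simp only: if_True)
next
  case False
  then have "1/2 \<le> real i / real (2 * n)"
    using assms(2) by (simp add: field_split_simps)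
  moreover have "2 * (real i / real (2 * n)) - 1 = real (i - n) / real n"
    "2 * (real (Suc i) / real (2 * n)) - 1 = real (Suc (i - n)) / real n"
    using False assms(2) by (simp_all add: field_split_simps of_nat_diff)
  ultimately show ?thesis
    using False joinpaths_image_second_half[OF assms(1)] by simp
qed

definition path_chain :: "'a::topological_space set \<Rightarrow> nat \<Rightarrow> (nat \<Rightarrow> 'a) \<Rightarrow> (nat \<Rightarrow> real \<Rightarrow> 'a) \<Rightarrow> bool" where
  "path_chain S n x g \<longleftrightarrow> (\<forall>i<n. path_in S (x i) (x (Suc i)) (g i))"

lemma path_chain_le: "path_chain S n x g \<Longrightarrow> m \<le> n \<Longrightarrow> path_chain S m x g"
  unfolding path_chain_def by auto

lemma path_chain_ends: "path_chain S n x g \<Longrightarrow> i < n \<Longrightarrow> g i 0 = x i \<and> g i 1 = x (Suc i)"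
  unfolding path_chain_def path_in_def pathstart_def pathfinish_def by auto

text \<open>The concatenation of g 0, ..., g (n - 1), the i-th path traversed during the time interval
  [i / n, (i + 1) / n]; the case n = 0 is junk.\<close>

fun concat_paths :: "nat \<Rightarrow> (nat \<Rightarrow> real \<Rightarrow> 'a) \<Rightarrow> real \<Rightarrow> 'a" where
  "concat_paths 0 g = g 0"
| "concat_paths (Suc 0) g = g 0"
| "concat_paths (Suc (Suc n)) g =
     joinpaths_at (real (Suc n) / real (Suc (Suc n))) (concat_paths (Suc n) g) (g (Suc n))"

lemma concat_paths_Suc:
  "0 < n \<Longrightarrow> concat_paths (Suc n) g = joinpaths_at (real n / real (Suc n)) (concat_paths n g) (g n)"
  by (cases n) auto

lemma concat_paths_cong:
  "0 < n \<Longrightarrow> (\<And>i. i < n \<Longrightarrow> g i = g' i) \<Longrightarrow> concat_paths n g = concat_paths n g'"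
proof (induction n)
  case (Suc n)
  then show ?case
    by (cases "n = 0") (simp_all add: concat_paths_Suc)
qed simp

lemma concat_paths_two: "concat_paths 2 g = g 0 +++ g 1"
  by (simp add: numeral_2_eq_2 joinpaths_at_half)

lemma homotopic_paths_concat_paths_Suc:
  assumes g: "path_chain S (Suc n) x g" and n: "0 < n"
    and c: "path_in S (x 0) (x n) (concat_paths n g)"
  shows "homotopic_paths S (concat_paths (Suc n) g) (concat_paths n g +++ g n)"
proof -
  have "path_in S (x n) (x (Suc n)) (g n)"
    using g by (simp add: path_chain_def)
  then have "homotopic_paths S (concat_paths n g +++ g n) (concat_paths (Suc n) g)"
    unfolding concat_paths_Suc[OF n] using n c by (intro homotopic_paths_joinpaths_at) auto
  then show ?thesis
    by (rule homotopic_paths_sym)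
qed

lemma path_in_concat_paths:
  "path_chain S n x g \<Longrightarrow> 0 < n \<Longrightarrow> path_in S (x 0) (x n) (concat_paths n g)"
proof (induction n)
  case (Suc n)
  show ?case
  proof (cases "n = 0")
    case False
    have "path_in S (x 0) (x n) (concat_paths n g)"
      using Suc False path_chain_le by fastforce
    moreover have "path_in S (x n) (x (Suc n)) (g n)"
      using Suc.prems by (simp add: path_chain_def)
    ultimately show ?thesis
      using homotopic_paths_concat_paths_Suc[OF Suc.prems(1)] False
      by (blast intro: path_in_homotopic homotopic_paths_sym path_in_join)
  qed (use Suc.prems in \<open>simp add: path_chain_def\<close>)
qed simp

lemma concat_paths_piece:
  assumes "path_chain S n x g" "k < n" "s \<in> {0..1}"
  shows "concat_paths n g ((real k + s) / real n) = g k s"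
  using assms
proof (induction n arbitrary: k s)
  case (Suc n)
  show ?case
  proof (cases "n = 0")
    case n: False
    let ?l = "real n / real (Suc n)"
    have IH: "concat_paths n g ((real k' + s') / real n) = g k' s'" if "k' < n" "s' \<in> {0..1}" for k' s'
      using Suc.IH[OF path_chain_le[OF Suc.prems(1)]] that by simp
    consider "k < n" | "k = n" "s = 0" | "k = n" "s \<noteq> 0"
      using Suc.prems by linarith
    then show ?thesis
    proof cases
      case 1
      then have "real (Suc k) \<le> real n"
        by (simp only: of_nat_le_iff Suc_le_eq)
      then have "real k + s \<le> real n"
        using Suc.prems(3) by simp
      then have "(real k + s) / real (Suc n) \<le> ?l"
        by (rule divide_right_mono) simp
      moreover have "(real k + s) / real (Suc n) / ?l = (real k + s) / real n"
        using n by (simp add: divide_divide_eq_right divide_divide_eq_left del: of_nat_Suc)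
      ultimately show ?thesis
        using IH[OF 1 Suc.prems(3)] n by (simp add: concat_paths_Suc joinpaths_at_def)
    next
      case 2
      have "concat_paths n g ((real (n - 1) + 1) / real n) = g (n - 1) 1"
        using n by (intro IH) auto
      then show ?thesis
        using 2 n path_chain_ends[OF Suc.prems(1), of "n - 1"] path_chain_ends[OF Suc.prems(1), of n]
        by (simp add: concat_paths_Suc joinpaths_at_def of_nat_diff)
    next
      case 3
      then have "real n < real k + s"
        using Suc.prems(3) by simp
      then have "?l < (real k + s) / real (Suc n)"
        by (rule divide_strict_right_mono) simp
      moreover have "1 - ?l = 1 / real (Suc n)" "(real k + s) / real (Suc n) - ?l = s / real (Suc n)"
        using 3 by (simp_all add: field_simps del: of_nat_Suc)
      ultimately show ?thesis
        using 3 n by (simp add: concat_paths_Suc joinpaths_at_def)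
    qed
  qed (use Suc.prems in simp)
qed simp

lemma concat_paths_vertex:
  assumes "path_chain S n x g" "i \<le> n" "0 < n"
  shows "concat_paths n g (real i / real n) = x i"
proof (cases "i < n")
  case True
  then show ?thesis
    using concat_paths_piece[OF assms(1) True, of 0] path_chain_ends[OF assms(1) True] by simp
next
  case False
  then have "i = n" "n - 1 < n"
    using assms(2,3) by auto
  then show ?thesis
    using concat_paths_piece[OF assms(1) \<open>n - 1 < n\<close>, of 1] path_chain_ends[OF assms(1) \<open>n - 1 < n\<close>]
    by (simp add: of_nat_diff)
qed

lemma concat_paths_image_piece:
  assumes "path_chain S n x g" "k < n"
  shows "concat_paths n g ` {real k / real n..real (Suc k) / real n} \<subseteq> path_image (g k)"
proof
  fix z assume "z \<in> concat_paths n g ` {real k / real n..real (Suc k) / real n}"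
  then obtain t where t: "real k / real n \<le> t" "t \<le> real (Suc k) / real n" "z = concat_paths n g t"
    by auto
  have s: "real n * t - real k \<in> {0..1}" and "t = (real k + (real n * t - real k)) / real n"
    using t(1,2) assms(2) by (auto simp: field_split_simps)
  then have "z = g k (real n * t - real k)"
    using concat_paths_piece[OF assms s] t(3) by simp
  with s show "z \<in> path_image (g k)"
    unfolding path_image_def by blast
qed

lemma path_image_concat_paths:
  assumes "path_chain S n x g" "0 < n"
  shows "path_image (concat_paths n g) \<subseteq> (\<Union>k<n. path_image (g k))"
proof
  fix z assume "z \<in> path_image (concat_paths n g)"
  then obtain t where "t \<in> {0..1}" "z = concat_paths n g t"
    by (auto simp: path_image_def)
  moreover obtain k s where "k < n" "s \<in> {0..1}" "t = (real k + s) / real n"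
    using unit_interval_piece[OF assms(2) \<open>t \<in> {0..1}\<close>] .
  ultimately have "z \<in> path_image (g k)"
    using concat_paths_piece[OF assms(1)] by (auto simp: path_image_def)
  with \<open>k < n\<close> show "z \<in> (\<Union>k<n. path_image (g k))"
    by blast
qed

lemma path_chain_block:
  assumes "path_chain S (n * m) x g" "i < n"
  shows "path_chain S m (\<lambda>j. x (i * m + j)) (\<lambda>j. g (i * m + j))"
proof -
  have "i * m + j < n * m" if "j < m" for j
  proof -
    have "i * m + j < Suc i * m"
      using that by simp
    also have "\<dots> \<le> n * m"
      using assms(2) by (intro mult_le_mono1) simp
    finally show ?thesis .
  qed
  then show ?thesis
    using assms(1) by (auto simp: path_chain_def)
qed

lemma path_chain_blocks:
  assumes "path_chain S (n * m) x g" "0 < m"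
  shows "path_chain S n (\<lambda>i. x (i * m)) (\<lambda>i. concat_paths m (\<lambda>j. g (i * m + j)))"
  unfolding path_chain_def
proof (intro allI impI)
  fix i assume "i < n"
  from path_in_concat_paths[OF path_chain_block[OF assms(1) this] assms(2)]
  show "path_in S (x (i * m)) (x (Suc i * m)) (concat_paths m (\<lambda>j. g (i * m + j)))"
    by (simp add: add.commute)
qed

lemma concat_paths_blocks:
  assumes g: "path_chain S (n * m) x g" and n: "0 < n" and m: "0 < m" and t: "t \<in> {0..1}"
  shows "concat_paths (n * m) g t = concat_paths n (\<lambda>i. concat_paths m (\<lambda>j. g (i * m + j))) t"
proof -
  have "0 < n * m"
    using n m by simp
  then obtain k s where k: "k < n * m" and s: "s \<in> {0..1}" and t_eq: "t = (real k + s) / real (n * m)"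
    using unit_interval_piece[OF _ t] by blast
  define i j where "i = k div m" and "j = k mod m"
  have ij: "k = i * m + j" "i < n" "j < m"
    using k m by (auto simp: i_def j_def less_mult_imp_div_less)
  have js: "(real j + s) / real m \<in> {0..1}"
  proof -
    have "real (Suc j) \<le> real m"
      using ij(3) by (simp only: of_nat_le_iff Suc_le_eq)
    then show ?thesis
      using s m by (auto simp: field_split_simps)
  qed
  have "t = (real i + (real j + s) / real m) / real n"
    using t_eq ij(1) m by (simp add: field_split_simps)
  then have "concat_paths n (\<lambda>i. concat_paths m (\<lambda>j. g (i * m + j))) t
      = concat_paths m (\<lambda>j. g (i * m + j)) ((real j + s) / real m)"
    using concat_paths_piece[OF path_chain_blocks[OF g m] ij(2) js] by simp
  also have "\<dots> = g k s"
    using concat_paths_piece[OF path_chain_block[OF g ij(2)] ij(3) s] ij(1) by simp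
  also have "\<dots> = concat_paths (n * m) g t"
    using concat_paths_piece[OF g k s] t_eq by simp
  finally show ?thesis ..
qed

definition path_pieces :: "nat \<Rightarrow> (real \<Rightarrow> 'a) \<Rightarrow> nat \<Rightarrow> real \<Rightarrow> 'a" where
  "path_pieces n p i = p \<circ> linepath (real i / real n) (real (Suc i) / real n)"

lemma path_image_path_pieces:
  "path_image (path_pieces n p i) = p ` {real i / real n..real (Suc i) / real n}"
  by (simp add: path_pieces_def path_image_compose closed_segment_eq_real_ivl divide_right_mono)

lemma path_chain_path_pieces:
  assumes "path p" "path_image p \<subseteq> S" "0 < n"
  shows "path_chain S n (\<lambda>i. p (real i / real n)) (path_pieces n p)"
  unfolding path_chain_def
proof (intro allI impI)
  fix i assume "i < n"
  then have sub: "{real i / real n..real (Suc i) / real n} \<subseteq> {0..1}"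
    by (rule piece_subset_unit_interval)
  have "path (path_pieces n p i)"
    unfolding path_pieces_def using assms(1) sub
    by (intro path_continuous_image continuous_on_subset[OF assms(1)[unfolded path_def]])
       (auto simp: closed_segment_eq_real_ivl divide_right_mono)
  moreover have "path_image (path_pieces n p i) \<subseteq> S"
    unfolding path_image_path_pieces
    using order_trans[OF image_mono[OF sub] assms(2)[unfolded path_image_def]] .
  ultimately show "path_in S (p (real i / real n)) (p (real (Suc i) / real n)) (path_pieces n p i)"
    by (simp add: path_in_def path_pieces_def pathstart_compose pathfinish_compose)
qed

lemma concat_paths_path_pieces:
  assumes "path p" "path_image p \<subseteq> S" "0 < n" "t \<in> {0..1}"
  shows "concat_paths n (path_pieces n p) t = p t"
proof -
  obtain k s where "k < n" "s \<in> {0..1}" "t = (real k + s) / real n"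
    using unit_interval_piece[OF assms(3,4)] .
  moreover have "linepath (real k / real n) (real (Suc k) / real n) s = (real k + s) / real n"
    by (simp add: linepath_def field_split_simps)
  ultimately show ?thesis
    using concat_paths_piece[OF path_chain_path_pieces[OF assms(1-3)]] by (simp add: path_pieces_def)
qed

lemma homotopic_paths_ladder:
  assumes a: "path_chain S n x a" and b: "path_chain S n y b" and n: "0 < n"
    and r: "\<And>i. i \<le> n \<Longrightarrow> path_in S (x i) (y i) (r i)"
    and square: "\<And>i. i < n \<Longrightarrow> homotopic_paths S (a i +++ r (Suc i)) (r i +++ b i)"
  shows "homotopic_paths S (concat_paths n a +++ r n) (r 0 +++ concat_paths n b)"
  using a b n r square
proof (induction n)
  case (Suc n)
  show ?case
  proof (cases "n = 0")
    case False
    then have n: "0 < n"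
      by simp
    have a': "path_chain S n x a" and b': "path_chain S n y b"
      using Suc.prems(1,2) path_chain_le by fastforce+
    have A: "path_in S (x 0) (x n) (concat_paths n a)" and B: "path_in S (y 0) (y n) (concat_paths n b)"
      using path_in_concat_paths[OF a'] path_in_concat_paths[OF b'] False by auto
    have an: "path_in S (x n) (x (Suc n)) (a n)" and bn: "path_in S (y n) (y (Suc n)) (b n)"
      using Suc.prems(1,2) by (auto simp: path_chain_def)
    have r0: "path_in S (x 0) (y 0) (r 0)" and rn: "path_in S (x n) (y n) (r n)"
      and rSn: "path_in S (x (Suc n)) (y (Suc n)) (r (Suc n))"
      using Suc.prems(4) by auto
    have aSn: "path_in S (x 0) (x (Suc n)) (concat_paths (Suc n) a)"
      using path_in_concat_paths[OF Suc.prems(1)] by simp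
    have IH: "homotopic_paths S (concat_paths n a +++ r n) (r 0 +++ concat_paths n b)"
      using Suc.IH[OF a' b' n] Suc.prems(4,5) by simp
    have "homotopic_paths S (concat_paths (Suc n) a +++ r (Suc n))
        ((concat_paths n a +++ a n) +++ r (Suc n))"
      using homotopic_paths_concat_paths_Suc[OF Suc.prems(1) n A] aSn rSn
      by (rule homotopic_paths_whisker_right)
    also have "homotopic_paths S \<dots> (concat_paths n a +++ (a n +++ r (Suc n)))"
      using homotopic_paths_assoc_in[OF A an rSn] by (rule homotopic_paths_sym)
    also have "homotopic_paths S \<dots> (concat_paths n a +++ (r n +++ b n))"
      using Suc.prems(5)[of n] A path_in_join[OF an rSn] by (intro homotopic_paths_whisker_left) auto
    also have "homotopic_paths S \<dots> ((concat_paths n a +++ r n) +++ b n)"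
      using A rn bn by (rule homotopic_paths_assoc_in)
    also have "homotopic_paths S \<dots> ((r 0 +++ concat_paths n b) +++ b n)"
      using IH path_in_join[OF A rn] bn by (rule homotopic_paths_whisker_right)
    also have "homotopic_paths S \<dots> (r 0 +++ (concat_paths n b +++ b n))"
      using homotopic_paths_assoc_in[OF r0 B bn] by (rule homotopic_paths_sym)
    also have "homotopic_paths S \<dots> (r 0 +++ concat_paths (Suc n) b)"
      using homotopic_paths_sym[OF homotopic_paths_concat_paths_Suc[OF Suc.prems(2) n B]] r0
        path_in_join[OF B bn]
      by (rule homotopic_paths_whisker_left)
    finally show ?thesis .
  qed (use Suc.prems(5)[of 0] in simp)
qed simp

lemma homotopic_paths_ladder_const:
  assumes a: "path_chain S n x a" and b: "path_chain S n y b" and n: "0 < n"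
    and r: "\<And>i. i \<le> n \<Longrightarrow> path_in S (x i) (y i) (r i)"
    and square: "\<And>i. i < n \<Longrightarrow> homotopic_paths S (a i +++ r (Suc i)) (r i +++ b i)"
    and r0: "homotopic_paths S (r 0) (\<lambda>t. x 0)" and rn: "homotopic_paths S (r n) (\<lambda>t. x n)"
  shows "homotopic_paths S (concat_paths n a) (concat_paths n b)"
proof -
  have A: "path_in S (x 0) (x n) (concat_paths n a)" and B: "path_in S (y 0) (y n) (concat_paths n b)"
    using path_in_concat_paths[OF a n] path_in_concat_paths[OF b n] .
  have y: "y 0 = x 0" "y n = x n"
    using homotopic_paths_imp_pathfinish[OF r0] homotopic_paths_imp_pathfinish[OF rn] r[of 0] r[of n]
    by (auto simp: path_in_def pathfinish_def)
  have "homotopic_paths S (concat_paths n a) (concat_paths n a +++ (\<lambda>t. x n))"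
    using homotopic_paths_rid_const[OF A] by (rule homotopic_paths_sym)
  also have "homotopic_paths S \<dots> (concat_paths n a +++ r n)"
    using homotopic_paths_sym[OF rn] A path_in_const path_in_imp_mem[OF A]
    by (intro homotopic_paths_whisker_left) auto
  also have "homotopic_paths S \<dots> (r 0 +++ concat_paths n b)"
    using a b n r square by (rule homotopic_paths_ladder)
  also have "homotopic_paths S \<dots> ((\<lambda>t. x 0) +++ concat_paths n b)"
    using r0 r[of 0] B by (intro homotopic_paths_whisker_right) auto
  also have "homotopic_paths S \<dots> (concat_paths n b)"
    using homotopic_paths_lid_const[OF B] y by simp
  finally show ?thesis .
qed

section \<open>Metric preliminaries\<close>

lemma ball_subset_ball_dist:
  fixes c y :: "'a::metric_space"
  assumes "dist c y < d" "d + r \<le> R"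
  shows "ball y r \<subseteq> ball c R"
proof
  fix z assume "z \<in> ball y r"
  then have "dist c z < d + r"
    using dist_triangle[of c z y] assms(1) by (simp add: dist_commute)
  then show "z \<in> ball c R"
    using assms(2) by simp
qed

lemma path_fine_partition:
  fixes p :: "real \<Rightarrow> 'a::metric_space"
  assumes "path p" "0 < \<sigma>"
  shows "\<exists>N>0. \<forall>n\<ge>N. \<forall>i<n. p ` {real i / real n..real (Suc i) / real n} \<subseteq> ball (p (real i / real n)) \<sigma>"
proof -
  have "uniformly_continuous_on {0..1} p"
    using assms(1) unfolding path_def by (intro compact_uniformly_continuous) auto
  then obtain \<delta> where \<delta>: "0 < \<delta>"
    and close: "\<And>s t. s \<in> {0..1} \<Longrightarrow> t \<in> {0..1} \<Longrightarrow> dist t s < \<delta> \<Longrightarrow> dist (p t) (p s) < \<sigma>"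
    unfolding uniformly_continuous_on_def using assms(2) by metis
  obtain N :: nat where N: "1 / \<delta> < real N"
    using reals_Archimedean2 by blast
  then have N0: "0 < N"
    using \<delta> by (auto intro: ccontr)
  have "p ` {real i / real n..real (Suc i) / real n} \<subseteq> ball (p (real i / real n)) \<sigma>"
    if n: "N \<le> n" and i: "i < n" for n i
  proof
    fix z assume "z \<in> p ` {real i / real n..real (Suc i) / real n}"
    then obtain t where t: "t \<in> {real i / real n..real (Suc i) / real n}" "z = p t"
      by auto
    have "1 / real n \<le> 1 / real N"
      using n N0 by (simp add: field_split_simps)
    also have "\<dots> < \<delta>"
      using N \<delta> N0 by (simp add: field_split_simps)
    finally have "dist t (real i / real n) < \<delta>"
      using t(1) by (auto simp: dist_real_def add_divide_distrib)
    moreover have "real i / real n \<in> {real i / real n..real (Suc i) / real n}"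
      by (simp add: divide_right_mono)
    then have "t \<in> {0..1}" "real i / real n \<in> {0..1}"
      using piece_mem_unit_interval[OF i t(1)] piece_mem_unit_interval[OF i] by blast+
    ultimately show "z \<in> ball (p (real i / real n)) \<sigma>"
      using close t(2) by (simp add: dist_commute)
  qed
  then show ?thesis
    using N0 by blast
qed

lemma uniformly_continuous_on_grid:
  fixes H :: "real \<times> real \<Rightarrow> 'a::metric_space"
  assumes H: "continuous_on ({0..1} \<times> {0..1}) H" and \<epsilon>: "0 < \<epsilon>"
  obtains L :: nat where "0 < L" "\<And>M s t s' t'. L \<le> M \<Longrightarrow> s \<in> {0..1} \<Longrightarrow> t \<in> {0..1} \<Longrightarrow>
      s' \<in> {0..1} \<Longrightarrow> t' \<in> {0..1} \<Longrightarrow> \<bar>s - s'\<bar> \<le> 1 / real M \<Longrightarrow> \<bar>t - t'\<bar> \<le> 1 / real M \<Longrightarrow>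
      dist (H (s, t)) (H (s', t')) < \<epsilon>"
proof -
  have "uniformly_continuous_on ({0..1} \<times> {0..1}) H"
    using H by (rule compact_uniformly_continuous) (intro compact_Times compact_Icc)
  then obtain \<delta> where \<delta>: "0 < \<delta>" and close: "\<And>z z'. z \<in> {0..1} \<times> {0..1} \<Longrightarrow> z' \<in> {0..1} \<times> {0..1} \<Longrightarrow>
      dist z' z < \<delta> \<Longrightarrow> dist (H z') (H z) < \<epsilon>"
    unfolding uniformly_continuous_on_def using \<epsilon> by metis
  obtain L :: nat where L: "2 / \<delta> < real L"
    using reals_Archimedean2 by blast
  then have L0: "0 < L"
    using \<delta> by (auto intro: ccontr)
  show ?thesis
  proof (rule that[OF L0])
    fix M s t s' t' assume M: "L \<le> M" and st: "s \<in> {0..1}" "t \<in> {0..1}" "s' \<in> {0..1}" "t' \<in> {0..1}"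
      and d: "\<bar>s - s'\<bar> \<le> 1 / real M" "\<bar>t - t'\<bar> \<le> 1 / real M"
    have "dist (s', t') (s, t) \<le> \<bar>s - s'\<bar> + \<bar>t - t'\<bar>"
      using sqrt_sum_squares_le_sum_abs[of "s - s'" "t - t'"]
      by (simp add: dist_Pair_Pair dist_real_def power2_commute)
    also have "\<dots> \<le> 2 / real M"
      using d by simp
    also have "\<dots> \<le> 2 / real L"
      using M L0 by (simp add: frac_le)
    also have "\<dots> < \<delta>"
      using L \<delta> L0 by (simp add: field_split_simps)
    finally show "dist (H (s, t)) (H (s', t')) < \<epsilon>"
      using close[of "(s, t)" "(s', t')"] st by (simp add: dist_commute)
  qed
qed

definition small_loops_null :: "'a::metric_space set \<Rightarrow> real \<Rightarrow> bool" where
  "small_loops_null Y \<rho> \<longleftrightarrow> (\<forall>c\<in>Y. \<forall>g. path g \<and> pathfinish g = pathstart g \<and> path_image g \<subseteq> Y \<inter> ball c \<rho>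
      \<longrightarrow> homotopic_loops Y g (\<lambda>t. pathstart g))"

lemma homotopic_paths_in_small_ball:
  assumes Y: "small_loops_null Y \<rho>" "c \<in> Y"
    and p: "path_in Y u v p" "path_image p \<subseteq> ball c \<rho>"
    and q: "path_in Y u v q" "path_image q \<subseteq> ball c \<rho>"
  shows "homotopic_paths Y p q"
proof -
  have "path_in Y u u (p +++ reversepath q)"
    using p(1) path_in_reversepath[OF q(1)] by (rule path_in_join)
  moreover have "path_image (p +++ reversepath q) \<subseteq> ball c \<rho>"
    using path_image_join_subset[of p "reversepath q"] p(2) q(2) by auto
  ultimately have "homotopic_loops Y (p +++ reversepath q) (\<lambda>t. pathstart (p +++ reversepath q))"
    using Y unfolding small_loops_null_def path_in_def by blast
  then show ?thesis
    using p(1) q(1) by (rule homotopic_paths_loop_parts_const)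
qed

definition correspondence ::
    "'a::metric_space set \<Rightarrow> 'b::metric_space set \<Rightarrow> ('a \<Rightarrow> 'b \<Rightarrow> bool) \<Rightarrow> real \<Rightarrow> bool" where
  "correspondence X Y C e \<longleftrightarrow> (\<forall>x\<in>X. \<exists>y\<in>Y. C x y) \<and> (\<forall>y\<in>Y. \<exists>x\<in>X. C x y) \<and>
     (\<forall>x\<in>X. \<forall>x'\<in>X. \<forall>y\<in>Y. \<forall>y'\<in>Y. C x y \<longrightarrow> C x' y' \<longrightarrow> \<bar>dist x x' - dist y y'\<bar> \<le> e)"

lemma correspondence_swap: "correspondence X Y C e \<Longrightarrow> correspondence Y X (\<lambda>y x. C x y) e"
  unfolding correspondence_def by (metis abs_minus_commute minus_diff_eq)

definition short_path_connected :: "'a::metric_space set \<Rightarrow> real \<Rightarrow> bool" where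
  "short_path_connected Y \<eta> \<longleftrightarrow> (\<forall>u\<in>Y. \<forall>v\<in>Y. \<exists>q. path_in Y u v q \<and> path_image q \<subseteq> ball u (dist u v + \<eta>))"

section \<open>Shadows of loops\<close>

locale loop_transfer =
  fixes X :: "'a::metric_space set" and Y :: "'b::metric_space set" and C :: "'a \<Rightarrow> 'b \<Rightarrow> bool"
    and e \<eta> \<rho> :: real and a :: 'a and b :: 'b
  assumes correspondence: "correspondence X Y C e"
    and base: "a \<in> X" "b \<in> Y" "C a b"
    and short_paths: "short_path_connected Y \<eta>"
    and small_loops: "small_loops_null Y \<rho>"
    and eta: "0 < \<eta>" and rho: "3 * e + 4 * \<eta> < \<rho>"
begin

lemma distortion:
  "C x y \<Longrightarrow> C x' y' \<Longrightarrow> x \<in> X \<Longrightarrow> x' \<in> X \<Longrightarrow> y \<in> Y \<Longrightarrow> y' \<in> Y \<Longrightarrow> dist y y' \<le> dist x x' + e"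
  using correspondence unfolding correspondence_def by fastforce

lemma e_nonneg: "0 \<le> e"
  using distortion[OF base(3) base(3) base(1) base(1) base(2) base(2)] by simp

text \<open>Shadows are compared as long as their mesh and radii stay below this bound, which is the
  radius of the shadow paths produced from a mesh \<eta> by shadow_canonical.\<close>

definition max_radius :: real where
  "max_radius = e + 2 * \<eta>"

lemma max_radius_less_rho:
  "max_radius + e + max_radius < \<rho>" "max_radius + e + (e + \<eta>) < \<rho>" "max_radius < \<rho>" "e + \<eta> < \<rho>"
  using rho e_nonneg eta by (simp_all add: max_radius_def)

lemma eta_le_max_radius: "\<eta> \<le> max_radius"
  using e_nonneg eta by (simp add: max_radius_def)

definition corresponding_point :: "'a \<Rightarrow> 'b" where
  "corresponding_point x = (SOME y. y \<in> Y \<and> C x y)"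

lemma corresponding_point: "x \<in> X \<Longrightarrow> corresponding_point x \<in> Y \<and> C x (corresponding_point x)"
  using correspondence unfolding corresponding_point_def correspondence_def by (metis (mono_tags) someI_ex)

definition short_path :: "'b \<Rightarrow> 'b \<Rightarrow> real \<Rightarrow> 'b" where
  "short_path u v = (SOME q. path_in Y u v q \<and> path_image q \<subseteq> ball u (dist u v + \<eta>))"

lemma short_path:
  assumes "u \<in> Y" "v \<in> Y"
  shows "path_in Y u v (short_path u v)" "path_image (short_path u v) \<subseteq> ball u (dist u v + \<eta>)"
  using someI_ex[of "\<lambda>q. path_in Y u v q \<and> path_image q \<subseteq> ball u (dist u v + \<eta>)"] short_paths assms
  unfolding short_path_def short_path_connected_def by blast+

lemma short_path_subset_ball:
  assumes "u \<in> Y" "v \<in> Y" "dist u v \<le> d"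
  shows "path_image (short_path u v) \<subseteq> ball u (d + \<eta>)"
  using short_path(2)[OF assms(1,2)] assms(3) by auto

lemma short_path_null:
  assumes "u \<in> Y"
  shows "homotopic_paths Y (short_path u u) (\<lambda>t. u)"
proof (rule homotopic_paths_in_small_ball[OF small_loops assms])
  show "path_image (short_path u u) \<subseteq> ball u \<rho>"
    using short_path_subset_ball[OF assms assms, of \<eta>] eta rho e_nonneg by auto
  show "path_image (\<lambda>t. u) \<subseteq> ball u \<rho>"
    using eta rho e_nonneg by (auto simp: path_image_def)
  show "path_in Y u u (short_path u u)"
    using short_path(1)[OF assms assms] .
  show "path_in Y u u (\<lambda>t. u)"
    using assms by (rule path_in_const)
qed

lemma small_square:
  assumes c: "c \<in> Y"
    and p: "path_in Y u v p1" "path_in Y v w p2" "path_image p1 \<subseteq> ball c \<rho>" "path_image p2 \<subseteq> ball c \<rho>"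
    and q: "path_in Y u v' q1" "path_in Y v' w q2" "path_image q1 \<subseteq> ball c \<rho>" "path_image q2 \<subseteq> ball c \<rho>"
  shows "homotopic_paths Y (p1 +++ p2) (q1 +++ q2)"
proof (rule homotopic_paths_in_small_ball[OF small_loops c])
  show "path_in Y u w (p1 +++ p2)" "path_in Y u w (q1 +++ q2)"
    using p q by (auto intro: path_in_join)
  show "path_image (p1 +++ p2) \<subseteq> ball c \<rho>" "path_image (q1 +++ q2) \<subseteq> ball c \<rho>"
    using p q path_image_join_subset[of p1 p2] path_image_join_subset[of q1 q2] by auto
qed

definition shadow :: "real \<Rightarrow> real \<Rightarrow> (real \<Rightarrow> 'a) \<Rightarrow> nat \<Rightarrow> (nat \<Rightarrow> 'b) \<Rightarrow> (nat \<Rightarrow> real \<Rightarrow> 'b) \<Rightarrow> bool" where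
  "shadow \<sigma> \<kappa> p n ys qs \<longleftrightarrow> 0 < n \<and> ys 0 = b \<and> ys n = b \<and>
     (\<forall>i\<le>n. ys i \<in> Y \<and> C (p (real i / real n)) (ys i)) \<and>
     (\<forall>i<n. p ` {real i / real n..real (Suc i) / real n} \<subseteq> ball (p (real i / real n)) \<sigma>) \<and>
     path_chain Y n ys qs \<and> (\<forall>i<n. path_image (qs i) \<subseteq> ball (ys i) \<kappa>)"

lemma shadowD:
  assumes "shadow \<sigma> \<kappa> p n ys qs"
  shows "0 < n" "ys 0 = b" "ys n = b" "\<And>i. i \<le> n \<Longrightarrow> ys i \<in> Y"
    "\<And>i. i \<le> n \<Longrightarrow> C (p (real i / real n)) (ys i)" "path_chain Y n ys qs"
    "\<And>i. i < n \<Longrightarrow> path_image (qs i) \<subseteq> ball (ys i) \<kappa>"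
  using assms unfolding shadow_def by auto

lemma shadow_piece:
  "shadow \<sigma> \<kappa> p n ys qs \<Longrightarrow> i < n \<Longrightarrow>
    p ` {real i / real n..real (Suc i) / real n} \<subseteq> ball (p (real i / real n)) \<sigma>"
  unfolding shadow_def by blast

lemma path_in_concat_shadow: "shadow \<sigma> \<kappa> p n ys qs \<Longrightarrow> path_in Y b b (concat_paths n qs)"
  using path_in_concat_paths[of Y n ys qs] shadowD[of \<sigma> \<kappa> p n ys qs] by simp

lemma shadow_vertex_dist:
  assumes p: "path_in X a a p" and s: "shadow \<sigma> \<kappa> p n ys qs" and i: "i < n"
    and t: "t \<in> {real i / real n..real (Suc i) / real n}" and y: "y \<in> Y" "C (p t) y"
  shows "dist (ys i) y < \<sigma> + e"
proof -
  have "p ` {real i / real n..real (Suc i) / real n} \<subseteq> ball (p (real i / real n)) \<sigma>"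
    using s i unfolding shadow_def by blast
  from subsetD[OF this imageI[OF t]] have "dist (p (real i / real n)) (p t) < \<sigma>"
    by (simp only: mem_ball)
  moreover have "p (real i / real n) \<in> X" "p t \<in> X"
    using i piece_mem_unit_interval[OF i t] fraction_in_unit_interval[of i n]
    by (auto intro!: path_in_image[OF p] simp del: atLeastAtMost_iff)
  moreover have "ys i \<in> Y" "C (p (real i / real n)) (ys i)"
    using s i unfolding shadow_def by auto
  ultimately show ?thesis
    using distortion[of "p (real i / real n)" "ys i" "p t" y] y by fastforce
qed

lemma shadow_cong:
  assumes s: "shadow \<sigma> \<kappa> p n ys qs" and eq: "\<And>t. t \<in> {0..1} \<Longrightarrow> p' t = p t"
  shows "shadow \<sigma> \<kappa> p' n ys qs"
proof -
  have "p' ` {real i / real n..real (Suc i) / real n} = p ` {real i / real n..real (Suc i) / real n}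
        \<and> p' (real i / real n) = p (real i / real n)" if "i < n" for i
    using eq subsetD[OF piece_subset_unit_interval[OF that]] by (auto simp: divide_right_mono)
  moreover have "p' (real n / real n) = p (real n / real n)"
    using eq by (cases "n = 0") auto
  ultimately show ?thesis
    using s unfolding shadow_def by (metis le_neq_implies_less)
qed

definition shadow_vertices :: "(real \<Rightarrow> 'a) \<Rightarrow> nat \<Rightarrow> nat \<Rightarrow> 'b" where
  "shadow_vertices p n i = (if i = 0 \<or> i = n then b else corresponding_point (p (real i / real n)))"

definition shadow_paths :: "(real \<Rightarrow> 'a) \<Rightarrow> nat \<Rightarrow> nat \<Rightarrow> real \<Rightarrow> 'b" where
  "shadow_paths p n i = short_path (shadow_vertices p n i) (shadow_vertices p n (Suc i))"

lemma shadow_canonical: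
  assumes p: "path_in X a a p" and n: "0 < n"
    and fine: "\<And>i. i < n \<Longrightarrow> p ` {real i / real n..real (Suc i) / real n} \<subseteq> ball (p (real i / real n)) \<sigma>"
  shows "shadow \<sigma> (\<sigma> + e + \<eta>) p n (shadow_vertices p n) (shadow_paths p n)"
proof -
  let ?y = "shadow_vertices p n"
  have ends: "p 0 = a" "p 1 = a"
    using p by (auto simp: path_in_def pathstart_def pathfinish_def)
  have pX: "p (real i / real n) \<in> X" if "i \<le> n" for i
    using that n by (intro path_in_image[OF p]) (simp add: divide_le_eq_1)
  have y: "?y i \<in> Y \<and> C (p (real i / real n)) (?y i)" if "i \<le> n" for i
    using base corresponding_point[OF pX[OF that]] ends n by (auto simp: shadow_vertices_def)
  have "?y i \<in> Y" "?y (Suc i) \<in> Y" "dist (?y i) (?y (Suc i)) \<le> \<sigma> + e" if i: "i < n" for i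
  proof -
    show "?y i \<in> Y" "?y (Suc i) \<in> Y"
      using y i by auto
    have "real (Suc i) / real n \<in> {real i / real n..real (Suc i) / real n}"
      by (simp add: divide_right_mono)
    from subsetD[OF fine[OF i] imageI[OF this]]
    have "dist (p (real i / real n)) (p (real (Suc i) / real n)) < \<sigma>"
      by (simp only: mem_ball)
    then show "dist (?y i) (?y (Suc i)) \<le> \<sigma> + e"
      using distortion[of "p (real i / real n)" "?y i" "p (real (Suc i) / real n)" "?y (Suc i)"] y[of i]
        y[of "Suc i"] pX[of i] pX[of "Suc i"] i by fastforce
  qed
  then have "path_chain Y n ?y (shadow_paths p n)"
    "\<And>i. i < n \<Longrightarrow> path_image (shadow_paths p n i) \<subseteq> ball (?y i) (\<sigma> + e + \<eta>)"
    unfolding shadow_paths_def path_chain_def by (simp_all add: short_path short_path_subset_ball)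
  moreover have "?y 0 = b" "?y n = b"
    by (simp_all add: shadow_vertices_def)
  ultimately show ?thesis
    unfolding shadow_def using n y fine by blast
qed

lemma shadow_exists:
  assumes p: "path_in X a a p"
  shows "\<exists>N. \<forall>n\<ge>N. shadow \<eta> max_radius p n (shadow_vertices p n) (shadow_paths p n)"
proof -
  obtain N where "0 < N"
    and fine: "\<forall>n\<ge>N. \<forall>i<n. p ` {real i / real n..real (Suc i) / real n} \<subseteq> ball (p (real i / real n)) \<eta>"
    using path_fine_partition[OF _ eta, of p] p unfolding path_in_def by auto
  have "shadow \<eta> (\<eta> + e + \<eta>) p n (shadow_vertices p n) (shadow_paths p n)" if "N \<le> n" for n
    using fine that \<open>0 < N\<close> by (intro shadow_canonical[OF p]) auto
  then show ?thesis
    by (auto simp: max_radius_def algebra_simps)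
qed

lemma shadow_vertices_dist:
  assumes p: "path_in X a a p" and p': "path_in X a a p'"
    and s: "shadow \<sigma> \<kappa> p n ys qs" and s': "shadow \<sigma>' \<kappa>' p' n' ys' qs'" and i: "i \<le> n" and j: "j \<le> n'"
  shows "dist (ys i) (ys' j) \<le> dist (p (real i / real n)) (p' (real j / real n')) + e"
  using distortion[OF shadowD(5)[OF s i] shadowD(5)[OF s' j]
      path_in_image[OF p fraction_in_unit_interval[OF i shadowD(1)[OF s]]]
      path_in_image[OF p' fraction_in_unit_interval[OF j shadowD(1)[OF s']]]
      shadowD(4)[OF s i] shadowD(4)[OF s' j]] .

lemma shadow_next_vertex_dist:
  assumes "path_in X a a p" "shadow \<sigma> \<kappa> p n ys qs" "i < n"
  shows "dist (ys i) (ys (Suc i)) < \<sigma> + e"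
  using shadow_vertex_dist[OF assms _ shadowD(4,5)[OF assms(2), of "Suc i"]] assms(3)
  by (simp add: divide_right_mono)

lemma homotopic_paths_short_ladder:
  assumes g: "path_chain Y n x g" and h: "path_chain Y n y h" and n: "0 < n"
    and ends: "x 0 = b" "y 0 = b" "x n = b" "y n = b" and xy: "\<And>i. i \<le> n \<Longrightarrow> x i \<in> Y \<and> y i \<in> Y"
    and square: "\<And>i. i < n \<Longrightarrow>
      homotopic_paths Y (g i +++ short_path (x (Suc i)) (y (Suc i))) (short_path (x i) (y i) +++ h i)"
  shows "homotopic_paths Y (concat_paths n g) (concat_paths n h)"
proof (rule homotopic_paths_ladder_const[OF g h n _ square])
  show "path_in Y (x i) (y i) (short_path (x i) (y i))" if "i \<le> n" for i
    using xy[OF that] by (simp add: short_path)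
  show "homotopic_paths Y (short_path (x 0) (y 0)) (\<lambda>t. x 0)"
    "homotopic_paths Y (short_path (x n) (y n)) (\<lambda>t. x n)"
    using short_path_null[OF base(2)] ends by simp_all
qed

lemma shadow_block_image:
  assumes p: "path_in X a a p" and s: "shadow \<sigma> \<kappa> p n ys qs" and s': "shadow \<sigma>' \<kappa>' p (n * m) ws ps"
    and m: "0 < m" and i: "i < n"
  shows "path_image (concat_paths m (\<lambda>j. ps (i * m + j))) \<subseteq> ball (ys i) (\<sigma> + e + \<kappa>')"
proof -
  have "path_image (ps (i * m + j)) \<subseteq> ball (ys i) (\<sigma> + e + \<kappa>')" if j: "j < m" for j
  proof -
    have "i * m + j < Suc i * m"
      using j by simp
    also have "\<dots> \<le> n * m"
      using i by (intro mult_le_mono1) simp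
    finally have k: "i * m + j < n * m" "i * m + j \<le> n * m"
      by simp_all
    have "dist (ys i) (ws (i * m + j)) < \<sigma> + e"
      using shadow_vertex_dist[OF p s i block_fraction[OF shadowD(1)[OF s] m, of j i]
          shadowD(4,5)[OF s' k(2)]] j by simp
    then have "ball (ws (i * m + j)) \<kappa>' \<subseteq> ball (ys i) (\<sigma> + e + \<kappa>')"
      by (rule ball_subset_ball_dist) simp
    with shadowD(7)[OF s' k(1)] show ?thesis
      by (rule order_trans)
  qed
  then show ?thesis
    using path_image_concat_paths[OF path_chain_block[OF shadowD(6)[OF s'] i] m] by blast
qed

lemma shadow_refine:
  assumes p: "path_in X a a p" and s: "shadow \<sigma> \<kappa> p n ys qs" and s': "shadow \<sigma>' \<kappa>' p (n * m) ws ps"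
    and m: "0 < m" and bounds: "\<sigma> \<le> max_radius" "\<kappa> \<le> max_radius" "\<kappa>' \<le> max_radius"
  shows "homotopic_paths Y (concat_paths n qs) (concat_paths (n * m) ps)"
proof -
  have n: "0 < n"
    using shadowD(1)[OF s] .
  define B where "B i = concat_paths m (\<lambda>j. ps (i * m + j))" for i
  let ?r = "\<lambda>i. short_path (ys i) (ws (i * m))"
  have B: "path_chain Y n (\<lambda>i. ws (i * m)) B"
    unfolding B_def using shadowD(6)[OF s'] m by (rule path_chain_blocks)
  have vertices: "ys i \<in> Y" "ws (i * m) \<in> Y" "dist (ys i) (ws (i * m)) \<le> e" if "i \<le> n" for i
    using shadowD(4)[OF s that] shadowD(4)[OF s', of "i * m"]
      shadow_vertices_dist[OF p p s s' that, of "i * m"]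
      that m by simp_all
  have r: "path_in Y (ys i) (ws (i * m)) (?r i)" "path_image (?r i) \<subseteq> ball (ys i) (e + \<eta>)" if "i \<le> n" for i
    using vertices[OF that] short_path short_path_subset_ball by auto
  have square: "homotopic_paths Y (qs i +++ ?r (Suc i)) (?r i +++ B i)" if i: "i < n" for i
  proof (rule small_square)
    show "ys i \<in> Y"
      using vertices i by simp
    show "path_in Y (ys i) (ys (Suc i)) (qs i)" "path_in Y (ws (i * m)) (ws (Suc i * m)) (B i)"
      using shadowD(6)[OF s] B i by (simp_all add: path_chain_def)
    show "path_in Y (ys (Suc i)) (ws (Suc i * m)) (?r (Suc i))" "path_in Y (ys i) (ws (i * m)) (?r i)"
      using r(1)[of "Suc i"] r(1)[of i] i by simp_all
    show "path_image (qs i) \<subseteq> ball (ys i) \<rho>"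
      using shadowD(7)[OF s i] bounds max_radius_less_rho by (auto simp: subset_ball)
    show "path_image (?r i) \<subseteq> ball (ys i) \<rho>"
      using r(2)[of i] i subset_ball[of "e + \<eta>" \<rho> "ys i"] max_radius_less_rho by simp
    have "ball (ys (Suc i)) (e + \<eta>) \<subseteq> ball (ys i) \<rho>"
      using shadow_next_vertex_dist[OF p s i] bounds max_radius_less_rho
      by (intro ball_subset_ball_dist[of _ _ "\<sigma> + e"]) simp_all
    with r(2)[of "Suc i"] i show "path_image (?r (Suc i)) \<subseteq> ball (ys i) \<rho>"
      by simp
    have "ball (ys i) (\<sigma> + e + \<kappa>') \<subseteq> ball (ys i) \<rho>"
      using bounds max_radius_less_rho by (intro subset_ball) simp
    with shadow_block_image[OF p s s' m i] show "path_image (B i) \<subseteq> ball (ys i) \<rho>"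
      unfolding B_def by (rule order_trans)
  qed
  have "homotopic_paths Y (concat_paths n qs) (concat_paths n B)"
    using shadowD(2,3)[OF s] shadowD(2,3)[OF s'] vertices square
    by (intro homotopic_paths_short_ladder[OF shadowD(6)[OF s] B n]) simp_all
  also have "homotopic_paths Y (concat_paths n B) (concat_paths (n * m) ps)"
    unfolding B_def using concat_paths_blocks[OF shadowD(6)[OF s'] n m] path_in_concat_shadow[OF s']
    by (intro homotopic_paths_sym[OF homotopic_paths_eq]) (auto simp: path_in_def)
  finally show ?thesis .
qed

lemma shadows_close:
  assumes p: "path_in X a a p" and p': "path_in X a a p'"
    and s: "shadow \<eta> max_radius p n ys qs" and s': "shadow \<eta> max_radius p' n ys' qs'"
    and close: "\<And>j. j \<le> n \<Longrightarrow> dist (p (real j / real n)) (p' (real j / real n)) < \<eta>"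
  shows "homotopic_paths Y (concat_paths n qs) (concat_paths n qs')"
proof -
  let ?r = "\<lambda>j. short_path (ys j) (ys' j)"
  have vertices: "ys j \<in> Y" "ys' j \<in> Y" "dist (ys j) (ys' j) < \<eta> + e" if "j \<le> n" for j
    using shadowD(4)[OF s that] shadowD(4)[OF s' that] shadow_vertices_dist[OF p p' s s' that that]
      close[OF that] by simp_all
  have r: "path_in Y (ys j) (ys' j) (?r j)" "path_image (?r j) \<subseteq> ball (ys j) max_radius" if "j \<le> n" for j
    using vertices[OF that] short_path short_path_subset_ball[of "ys j" "ys' j" "\<eta> + e"]
    by (auto simp: max_radius_def algebra_simps)
  have near: "ball c max_radius \<subseteq> ball (ys j) \<rho>" if "dist (ys j) c < \<eta> + e" for j c
    using that by (rule ball_subset_ball_dist) (use max_radius_less_rho in \<open>simp add: max_radius_def\<close>)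
  have square: "homotopic_paths Y (qs j +++ ?r (Suc j)) (?r j +++ qs' j)" if j: "j < n" for j
  proof (rule small_square)
    show "ys j \<in> Y"
      using vertices j by simp
    show "path_in Y (ys j) (ys (Suc j)) (qs j)" "path_in Y (ys' j) (ys' (Suc j)) (qs' j)"
      using shadowD(6)[OF s] shadowD(6)[OF s'] j by (simp_all add: path_chain_def)
    show "path_in Y (ys (Suc j)) (ys' (Suc j)) (?r (Suc j))" "path_in Y (ys j) (ys' j) (?r j)"
      using r(1)[of "Suc j"] r(1)[of j] j by simp_all
    show "path_image (qs j) \<subseteq> ball (ys j) \<rho>" "path_image (?r j) \<subseteq> ball (ys j) \<rho>"
      using shadowD(7)[OF s j] r(2)[of j] j max_radius_less_rho subset_ball[of max_radius \<rho>] by auto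
    show "path_image (?r (Suc j)) \<subseteq> ball (ys j) \<rho>"
      using r(2)[of "Suc j"] near[OF shadow_next_vertex_dist[OF p s j]] j by auto
    show "path_image (qs' j) \<subseteq> ball (ys j) \<rho>"
      using shadowD(7)[OF s' j] near[of j] vertices(3)[of j] j by auto
  qed
  show ?thesis
    using shadowD(2,3)[OF s] shadowD(2,3)[OF s'] vertices square
    by (intro homotopic_paths_short_ladder[OF shadowD(6)[OF s] shadowD(6)[OF s'] shadowD(1)[OF s]]) simp_all
qed

lemma homotopy_row_shadow:
  assumes H: "continuous_on ({0..1} \<times> {0..1}) H" "H \<in> {0..1} \<times> {0..1} \<rightarrow> X"
    and ends: "H (u, 0) = a" "H (u, 1) = a" and u: "u \<in> {0..1}" and M: "0 < M"
    and fine: "\<And>t t'. t \<in> {0..1} \<Longrightarrow> t' \<in> {0..1} \<Longrightarrow> \<bar>t - t'\<bar> \<le> 1 / real M \<Longrightarrow>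
      dist (H (u, t)) (H (u, t')) < \<eta>"
  shows "path_in X a a (\<lambda>t. H (u, t))"
    "shadow \<eta> max_radius (\<lambda>t. H (u, t)) M
      (shadow_vertices (\<lambda>t. H (u, t)) M) (shadow_paths (\<lambda>t. H (u, t)) M)"
proof -
  have "continuous_on {0..1} (H \<circ> (\<lambda>t. (u, t)))"
    using u by (intro continuous_on_compose continuous_intros continuous_on_subset[OF H(1)]) auto
  moreover have "(\<lambda>t. H (u, t)) ` {0..1} \<subseteq> X"
    using H(2) u by auto
  ultimately show row: "path_in X a a (\<lambda>t. H (u, t))"
    using ends by (simp add: path_in_def path_def path_image_def pathstart_def pathfinish_def o_def)
  have "(\<lambda>t. H (u, t)) ` {real i / real M..real (Suc i) / real M} \<subseteq> ball (H (u, real i / real M)) \<eta>"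
    if i: "i < M" for i
  proof
    fix z assume "z \<in> (\<lambda>t. H (u, t)) ` {real i / real M..real (Suc i) / real M}"
    then obtain t where t: "t \<in> {real i / real M..real (Suc i) / real M}" "z = H (u, t)"
      by auto
    have "\<bar>real i / real M - t\<bar> \<le> 1 / real M"
      using t(1) by (auto simp: abs_le_iff add_divide_distrib)
    then show "z \<in> ball (H (u, real i / real M)) \<eta>"
      using fine fraction_in_unit_interval[of i M] piece_mem_unit_interval[OF i t(1)] i M t(2) by simp
  qed
  then have "shadow \<eta> (\<eta> + e + \<eta>) (\<lambda>t. H (u, t)) M (shadow_vertices (\<lambda>t. H (u, t)) M)
      (shadow_paths (\<lambda>t. H (u, t)) M)"
    by (intro shadow_canonical[OF row M])
  then show "shadow \<eta> max_radius (\<lambda>t. H (u, t)) M (shadow_vertices (\<lambda>t. H (u, t)) M)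
      (shadow_paths (\<lambda>t. H (u, t)) M)"
    by (simp add: max_radius_def algebra_simps)
qed

text \<open>The homotopy is cut into rows close enough for shadows_close to apply to neighbouring rows,
  on a grid refining the partitions of both given shadows.\<close>

lemma shadow_homotopy_invariant:
  assumes p: "path_in X a a p" and p': "path_in X a a p'" and h: "homotopic_paths X p p'"
    and s: "shadow \<sigma> \<kappa> p n ys qs" and s': "shadow \<sigma>' \<kappa>' p' n' ys' qs'"
    and bounds: "\<sigma> \<le> max_radius" "\<kappa> \<le> max_radius" "\<sigma>' \<le> max_radius" "\<kappa>' \<le> max_radius"
  shows "homotopic_paths Y (concat_paths n qs) (concat_paths n' qs')"
proof -
  obtain H :: "real \<times> real \<Rightarrow> 'a" where H: "continuous_on ({0..1} \<times> {0..1}) H" "H \<in> {0..1} \<times> {0..1} \<rightarrow> X"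
    and H0: "\<forall>x\<in>{0..1}. H (0, x) = p x" and H1: "\<forall>x\<in>{0..1}. H (1, x) = p' x"
    and ends: "\<forall>t\<in>{0..1}. pathstart (H \<circ> Pair t) = pathstart p \<and> pathfinish (H \<circ> Pair t) = pathfinish p"
    using h unfolding homotopic_paths by blast
  have Hends: "H (u, 0) = a" "H (u, 1) = a" if "u \<in> {0..1}" for u
    using ends that p by (auto simp: path_in_def pathstart_def pathfinish_def)
  obtain L where L: "0 < L" and close: "\<And>M u t u' t'. L \<le> M \<Longrightarrow> u \<in> {0..1} \<Longrightarrow> t \<in> {0..1} \<Longrightarrow>
      u' \<in> {0..1} \<Longrightarrow> t' \<in> {0..1} \<Longrightarrow> \<bar>u - u'\<bar> \<le> 1 / real M \<Longrightarrow> \<bar>t - t'\<bar> \<le> 1 / real M \<Longrightarrow>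
      dist (H (u, t)) (H (u', t')) < \<eta>"
    using uniformly_continuous_on_grid[OF H(1) eta] by blast
  have n: "0 < n" "0 < n'"
    using shadowD(1)[OF s] shadowD(1)[OF s'] by auto
  define M where "M = n * (n' * L)"
  have M: "0 < M" "L \<le> M"
    using n L by (simp_all add: M_def)
  define row where "row k t = H (real k / real M, t)" for k t
  define rs where "rs k = shadow_paths (row k) M" for k
  have row: "path_in X a a (row k)" "shadow \<eta> max_radius (row k) M (shadow_vertices (row k) M) (rs k)"
    if k: "k \<le> M" for k
  proof -
    have k01: "real k / real M \<in> {0..1}"
      using fraction_in_unit_interval[OF k M(1)] .
    show "path_in X a a (row k)" "shadow \<eta> max_radius (row k) M (shadow_vertices (row k) M) (rs k)"
      unfolding rs_def row_def using close[OF M(2)] k01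
      by (intro homotopy_row_shadow[OF H Hends[OF k01] k01 M(1)]; simp)+
  qed
  have rows: "homotopic_paths Y (concat_paths M (rs 0)) (concat_paths M (rs k))"
    if "k \<le> M" for k
    using that
  proof (induction k)
    case 0
    show ?case
      using path_in_concat_shadow[OF row(2)[of 0]] by (simp add: path_in_def)
  next
    case (Suc k)
    have "dist (row k (real j / real M)) (row (Suc k) (real j / real M)) < \<eta>" if j: "j \<le> M" for j
      using close[OF M(2)] fraction_in_unit_interval[OF _ M(1)] j Suc.prems
      by (simp add: row_def abs_minus_commute diff_divide_distrib[symmetric])
    then have "homotopic_paths Y (concat_paths M (rs k)) (concat_paths M (rs (Suc k)))"
      using Suc.prems by (intro shadows_close[OF row(1) row(1) row(2) row(2)]) simp_all
    with Suc show ?case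
      by (auto intro: homotopic_paths_trans)
  qed
  have s0: "shadow \<eta> max_radius p (n * (n' * L)) (shadow_vertices (row 0) M) (rs 0)"
    using shadow_cong[OF row(2)[of 0]] H0 by (simp add: row_def M_def)
  have sM: "shadow \<eta> max_radius p' (n' * (n * L)) (shadow_vertices (row M) M) (rs M)"
    using shadow_cong[OF row(2)[of M]] H1 M(1) by (simp add: row_def M_def mult.left_commute)
  have "homotopic_paths Y (concat_paths n qs) (concat_paths M (rs 0))"
    using shadow_refine[OF p s s0] n L bounds eta_le_max_radius by (simp add: M_def)
  also have "homotopic_paths Y \<dots> (concat_paths M (rs M))"
    using rows by simp
  also have "homotopic_paths Y \<dots> (concat_paths n' qs')"
    using shadow_refine[OF p' s' sM] n L bounds eta_le_max_radius
    by (simp add: M_def mult.left_commute homotopic_paths_sym)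
  finally show ?thesis .
qed

lemma shadow_join:
  assumes p: "path_in X a a p" and p': "path_in X a a p'"
    and s: "shadow \<sigma> \<kappa> p n ys qs" and s': "shadow \<sigma> \<kappa> p' n ys' qs'"
  shows "shadow \<sigma> \<kappa> (p +++ p') (2 * n) (\<lambda>i. if i \<le> n then ys i else ys' (i - n))
    (\<lambda>i. if i < n then qs i else qs' (i - n))"
proof -
  let ?ys = "\<lambda>i. if i \<le> n then ys i else ys' (i - n)"
  let ?qs = "\<lambda>i. if i < n then qs i else qs' (i - n)"
  have n: "0 < n"
    using shadowD(1)[OF s] .
  have fin: "pathfinish p = pathstart p'" and p1: "p 1 = p' 0"
    using p p' by (auto simp: path_in_def pathstart_def pathfinish_def)
  have vertices: "?ys i \<in> Y \<and> C ((p +++ p') (real i / real (2 * n))) (?ys i)" if "i \<le> 2 * n" for i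
  proof (cases "i \<le> n")
    case True
    then show ?thesis
      using shadowD(4,5)[OF s, of i] joinpaths_fraction[OF fin n, of i] by simp
  next
    case False
    then show ?thesis
      using shadowD(4,5)[OF s', of "i - n"] joinpaths_fraction[OF fin n, of i] that by simp
  qed
  have start: "(p +++ p') (real i / real (2 * n)) = p' (real (i - n) / real n)" if "n \<le> i" for i
    using joinpaths_fraction[OF fin n, of i] that p1 n by (cases "i = n") simp_all
  have pieces: "(p +++ p') ` {real i / real (2 * n)..real (Suc i) / real (2 * n)}
      \<subseteq> ball ((p +++ p') (real i / real (2 * n))) \<sigma>" if i: "i < 2 * n" for i
  proof (cases "i < n")
    case True
    have "(p +++ p') ` {real i / real (2 * n)..real (Suc i) / real (2 * n)} =
        p ` {real i / real n..real (Suc i) / real n}"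
      using joinpaths_piece_image[OF fin n, of i] True by (simp only: if_P)
    moreover have "(p +++ p') (real i / real (2 * n)) = p (real i / real n)"
      using joinpaths_fraction[OF fin n, of i] True by (simp only: if_P less_imp_le)
    ultimately show ?thesis
      using shadow_piece[OF s True] by (simp only:)
  next
    case False
    then have i': "i - n < n"
      using i by simp
    have "(p +++ p') ` {real i / real (2 * n)..real (Suc i) / real (2 * n)} =
        p' ` {real (i - n) / real n..real (Suc (i - n)) / real n}"
      using joinpaths_piece_image[OF fin n, of i] False by (simp only: if_not_P if_False)
    then show ?thesis
      using shadow_piece[OF s' i'] start[of i] False by (simp only: not_less)
  qed
  have chain: "path_in Y (?ys i) (?ys (Suc i)) (?qs i) \<and> path_image (?qs i) \<subseteq> ball (?ys i) \<kappa>"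
    if i: "i < 2 * n" for i
  proof (cases "i < n")
    case True
    then show ?thesis
      using shadowD(6,7)[OF s] by (simp add: path_chain_def)
  next
    case False
    then have "i - n < n" "Suc i - n = Suc (i - n)" "?ys i = ys' (i - n)"
      using i shadowD(2,3)[OF s] shadowD(2)[OF s'] by auto
    then show ?thesis
      using shadowD(6,7)[OF s'] False by (simp add: path_chain_def)
  qed
  show ?thesis
    unfolding shadow_def path_chain_def
  proof (intro conjI allI impI)
    show "0 < 2 * n" "?ys 0 = b" "?ys (2 * n) = b"
      using n shadowD(2)[OF s] shadowD(3)[OF s'] by simp_all
  qed (use vertices pieces chain in simp_all)
qed

definition transfer :: "(real \<Rightarrow> 'a) \<Rightarrow> real \<Rightarrow> 'b" where
  "transfer p = (SOME q. \<exists>n ys qs. shadow \<eta> max_radius p n ys qs \<and> q = concat_paths n qs)"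

lemma transfer_shadow:
  assumes "path_in X a a p"
  obtains n ys qs where "shadow \<eta> max_radius p n ys qs" "transfer p = concat_paths n qs"
proof -
  have "\<exists>q n ys qs. shadow \<eta> max_radius p n ys qs \<and> q = concat_paths n qs"
    using shadow_exists[OF assms] by blast
  then have "\<exists>n ys qs. shadow \<eta> max_radius p n ys qs \<and> transfer p = concat_paths n qs"
    unfolding transfer_def by (rule someI_ex)
  then show ?thesis
    using that by blast
qed

lemma path_in_transfer:
  assumes "path_in X a a p"
  shows "path_in Y b b (transfer p)"
proof -
  obtain n ys qs where "shadow \<eta> max_radius p n ys qs" "transfer p = concat_paths n qs"
    using transfer_shadow[OF assms] .
  then show ?thesis
    using path_in_concat_shadow by simp
qed

lemma transfer_homotopic_shadow:
  assumes "path_in X a a p" "shadow \<sigma> \<kappa> p n ys qs" "\<sigma> \<le> max_radius" "\<kappa> \<le> max_radius"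
  shows "homotopic_paths Y (transfer p) (concat_paths n qs)"
proof -
  obtain n' ys' qs' where "shadow \<eta> max_radius p n' ys' qs'" "transfer p = concat_paths n' qs'"
    using transfer_shadow[OF assms(1)] .
  moreover have "homotopic_paths X p p"
    using assms(1) by (simp add: path_in_def)
  ultimately show ?thesis
    using shadow_homotopy_invariant[OF assms(1) assms(1)] assms(2-4) eta_le_max_radius by simp
qed

lemma transfer_homotopic:
  assumes p: "path_in X a a p" and p': "path_in X a a p'" and h: "homotopic_paths X p p'"
  shows "homotopic_paths Y (transfer p) (transfer p')"
proof -
  obtain n ys qs where s: "shadow \<eta> max_radius p n ys qs" "transfer p = concat_paths n qs"
    using transfer_shadow[OF p] .
  obtain n' ys' qs' where s': "shadow \<eta> max_radius p' n' ys' qs'" "transfer p' = concat_paths n' qs'"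
    using transfer_shadow[OF p'] .
  show ?thesis
    using shadow_homotopy_invariant[OF p p' h s(1) s'(1)] s(2) s'(2) eta_le_max_radius by simp
qed

lemma transfer_join:
  assumes p: "path_in X a a p" and p': "path_in X a a p'"
  shows "homotopic_paths Y (transfer (p +++ p')) (transfer p +++ transfer p')"
proof -
  obtain N N' where N: "\<forall>n\<ge>N. shadow \<eta> max_radius p n (shadow_vertices p n) (shadow_paths p n)"
    and N': "\<forall>n\<ge>N'. shadow \<eta> max_radius p' n (shadow_vertices p' n) (shadow_paths p' n)"
    using shadow_exists[OF p] shadow_exists[OF p'] by blast
  define n where "n = max N N'"
  define qs qs' where "qs = shadow_paths p n" and "qs' = shadow_paths p' n"
  have s: "shadow \<eta> max_radius p n (shadow_vertices p n) qs"
    and s': "shadow \<eta> max_radius p' n (shadow_vertices p' n) qs'"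
    using N N' by (simp_all add: n_def qs_def qs'_def)
  let ?qs = "\<lambda>i. if i < n then qs i else qs' (i - n)"
  have n: "0 < n"
    using shadowD(1)[OF s] .
  have sj: "shadow \<eta> max_radius (p +++ p') (2 * n)
      (\<lambda>i. if i \<le> n then shadow_vertices p n i else shadow_vertices p' n (i - n)) ?qs"
    by (rule shadow_join[OF p p' s s'])
  have pp': "path_in X a a (p +++ p')"
    using p p' by (rule path_in_join)
  have "homotopic_paths Y (transfer (p +++ p')) (concat_paths (2 * n) ?qs)"
    using transfer_homotopic_shadow[OF pp' sj] eta_le_max_radius by simp
  also have "homotopic_paths Y \<dots> (concat_paths n qs +++ concat_paths n qs')"
  proof (rule homotopic_paths_eq)
    show "path (concat_paths (2 * n) ?qs)" "path_image (concat_paths (2 * n) ?qs) \<subseteq> Y"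
      using path_in_concat_shadow[OF sj] by (auto simp: path_in_def)
    have "concat_paths n (\<lambda>j. ?qs (0 * n + j)) = concat_paths n qs"
      "concat_paths n (\<lambda>j. ?qs (1 * n + j)) = concat_paths n qs'"
      using n by (auto intro: concat_paths_cong)
    then show "concat_paths (2 * n) ?qs t = (concat_paths n qs +++ concat_paths n qs') t"
      if "t \<in> {0..1}" for t
      using concat_paths_blocks[OF shadowD(6)[OF sj] _ n that] by (simp add: concat_paths_two)
  qed
  also have "homotopic_paths Y \<dots> (transfer p +++ transfer p')"
    using homotopic_paths_sym[OF transfer_homotopic_shadow[OF p s eta_le_max_radius order_refl]]
      homotopic_paths_sym[OF transfer_homotopic_shadow[OF p' s' eta_le_max_radius order_refl]]
      path_in_concat_shadow[OF s] path_in_concat_shadow[OF s']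
    by (rule homotopic_paths_join_in)
  finally show ?thesis .
qed

end

locale loop_transfer_pair =
  fwd: loop_transfer X Y C e \<eta> \<rho> a b + bwd: loop_transfer Y X "\<lambda>y x. C x y" e \<eta> \<rho> b a
  for X :: "'a::metric_space set" and Y :: "'b::metric_space set" and C e \<eta> \<rho> a b
begin

lemma shadow_of_shadow:
  assumes p: "path_in X a a p" and s: "fwd.shadow \<sigma> \<kappa> p n ys qs"
  shows "bwd.shadow \<kappa> \<sigma> (concat_paths n qs) n (\<lambda>i. p (real i / real n)) (path_pieces n p)"
proof -
  have n: "0 < n"
    using fwd.shadowD(1)[OF s] .
  have chain: "path_chain Y n ys qs"
    using fwd.shadowD(6)[OF s] .
  have vertex: "concat_paths n qs (real i / real n) = ys i" if "i \<le> n" for i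
    using concat_paths_vertex[OF chain that n] .
  have "p (real i / real n) \<in> X \<and> C (p (real i / real n)) (concat_paths n qs (real i / real n))"
    if "i \<le> n" for i
    using path_in_image[OF p fraction_in_unit_interval[OF that n]] fwd.shadowD(5)[OF s that] vertex[OF that]
    by simp
  moreover have "concat_paths n qs ` {real i / real n..real (Suc i) / real n}
      \<subseteq> ball (concat_paths n qs (real i / real n)) \<kappa>" if "i < n" for i
    using concat_paths_image_piece[OF chain that] fwd.shadowD(7)[OF s that] vertex[of i] that by simp
  moreover have "path_chain X n (\<lambda>i. p (real i / real n)) (path_pieces n p)"
    using p n by (intro path_chain_path_pieces) (auto simp: path_in_def)
  moreover have "path_image (path_pieces n p i) \<subseteq> ball (p (real i / real n)) \<sigma>" if "i < n" for i
    unfolding path_image_path_pieces using fwd.shadow_piece[OF s that] .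
  moreover have "p (real 0 / real n) = a" "p (real n / real n) = a"
    using p n by (simp_all add: path_in_def pathstart_def pathfinish_def)
  ultimately show ?thesis
    unfolding bwd.shadow_def using n by simp
qed

lemma transfer_inverse:
  assumes p: "path_in X a a p"
  shows "homotopic_paths X (bwd.transfer (fwd.transfer p)) p"
proof -
  obtain n ys qs where s: "fwd.shadow \<eta> fwd.max_radius p n ys qs" and q: "fwd.transfer p = concat_paths n qs"
    using fwd.transfer_shadow[OF p] .
  have n: "0 < n"
    using fwd.shadowD(1)[OF s] .
  have radius: "fwd.max_radius = bwd.max_radius"
    by (simp add: fwd.max_radius_def bwd.max_radius_def)
  have s': "bwd.shadow bwd.max_radius \<eta> (concat_paths n qs) n (\<lambda>i. p (real i / real n)) (path_pieces n p)"
    using shadow_of_shadow[OF p s] radius by simp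
  have "homotopic_paths X (bwd.transfer (concat_paths n qs)) (concat_paths n (path_pieces n p))"
    using fwd.path_in_concat_shadow[OF s] s' order_refl bwd.eta_le_max_radius
    by (rule bwd.transfer_homotopic_shadow)
  also have "homotopic_paths X (concat_paths n (path_pieces n p)) p"
    using p concat_paths_path_pieces[of p X n] n
    by (intro homotopic_paths_sym[OF homotopic_paths_eq]) (auto simp: path_in_def)
  finally show ?thesis
    using q by simp
qed

end

lemma fundamental_group_iso_correspondence:
  assumes C: "correspondence X Y C e" and base: "a \<in> X" "b \<in> Y" "C a b"
    and short: "short_path_connected X \<eta>" "short_path_connected Y \<eta>"
    and small: "small_loops_null X \<rho>" "small_loops_null Y \<rho>"
    and \<eta>: "0 < \<eta>" and \<rho>: "3 * e + 4 * \<eta> < \<rho>"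
  shows "fundamental_group X a \<cong> fundamental_group Y b"
proof -
  interpret XY: loop_transfer_pair X Y C e \<eta> \<rho> a b
    using assms correspondence_swap[OF C] by unfold_locales auto
  interpret YX: loop_transfer_pair Y X "\<lambda>y x. C x y" e \<eta> \<rho> b a
    using assms correspondence_swap[OF C] by unfold_locales auto
  have "loop_map X a Y b XY.fwd.transfer"
    by unfold_locales (simp_all add: XY.fwd.path_in_transfer XY.fwd.transfer_homotopic XY.fwd.transfer_join)
  then show ?thesis
    by (rule fundamental_group_isoI[where G = XY.bwd.transfer])
      (simp_all add: XY.bwd.path_in_transfer XY.bwd.transfer_homotopic XY.transfer_inverse
        YX.transfer_inverse)
qed

section \<open>Length spaces, r(Y) and Gromov--Hausdorff distance\<close>

lemma dist_le_curve_length: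
  assumes "t \<in> {0..1}"
  shows "ereal (dist (g 0) (g t)) \<le> curve_length g"
proof -
  define ts where "ts i = (if i = 0 then 0 else if i = (1::nat) then t else 1)" for i
  have "(2, ts) \<in> {(n, t). t 0 = 0 \<and> t n = 1 \<and> (\<forall>i<n. t i \<le> t (Suc i))}"
    using assms by (auto simp: ts_def less_2_cases_iff)
  then have "ereal (\<Sum>i<2. dist (g (ts i)) (g (ts (Suc i)))) \<le> curve_length g"
    unfolding curve_length_def by (rule SUP_upper2) simp
  moreover have "(\<Sum>i<2. dist (g (ts i)) (g (ts (Suc i)))) = dist (g 0) (g t) + dist (g t) (g 1)"
    by (simp add: ts_def numeral_2_eq_2)
  ultimately show ?thesis
    by (simp add: order_trans[rotated])
qed

lemma length_space_short_path_connected: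
  assumes S: "length_space S" and \<eta>: "0 < \<eta>"
  shows "short_path_connected S \<eta>"
  unfolding short_path_connected_def
proof (intro ballI)
  fix u v assume uv: "u \<in> S" "v \<in> S"
  then have "ereal (dist u v) =
      (INF g \<in> {g. path g \<and> path_image g \<subseteq> S \<and> pathstart g = u \<and> pathfinish g = v}. curve_length g)"
    using S unfolding length_space_def by blast
  moreover have "ereal (dist u v) < ereal (dist u v + \<eta>)"
    using \<eta> by simp
  ultimately have
    "(INF g \<in> {g. path g \<and> path_image g \<subseteq> S \<and> pathstart g = u \<and> pathfinish g = v}. curve_length g)
      < ereal (dist u v + \<eta>)"
    by simp
  then obtain g where g: "path_in S u v g" "curve_length g < ereal (dist u v + \<eta>)"
    unfolding INF_less_iff path_in_def by blast
  have "path_image g \<subseteq> ball u (dist u v + \<eta>)"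
  proof
    fix z assume "z \<in> path_image g"
    then obtain t where "t \<in> {0..1}" "z = g t"
      by (auto simp: path_image_def)
    then show "z \<in> ball u (dist u v + \<eta>)"
      using le_less_trans[OF dist_le_curve_length g(2)] g(1) by (simp add: path_in_def pathstart_def)
  qed
  with g(1) show "\<exists>q. path_in S u v q \<and> path_image q \<subseteq> ball u (dist u v + \<eta>)"
    by blast
qed

lemma small_loops_null_r_of:
  assumes "ereal \<rho> < r_of S"
  shows "small_loops_null S \<rho>"
proof -
  obtain r where r: "\<rho> < r" "\<forall>x\<in>S. \<forall>g. path g \<and> pathfinish g = pathstart g \<and>
      path_image g \<subseteq> {z\<in>S. dist x z < r} \<longrightarrow> homotopic_loops S g (\<lambda>t. pathstart g)"
    using assms unfolding r_of_def less_Sup_iff by auto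
  show ?thesis
    unfolding small_loops_null_def
  proof (intro ballI allI impI)
    fix c g assume c: "c \<in> S" and g: "path g \<and> pathfinish g = pathstart g \<and> path_image g \<subseteq> S \<inter> ball c \<rho>"
    then have "path_image g \<subseteq> {z\<in>S. dist c z < r}"
      using r(1) by auto
    then show "homotopic_loops S g (\<lambda>t. pathstart g)"
      using r(2) c g by blast
  qed
qed

lemma r_of_pos:
  assumes "r_of S \<noteq> -\<infinity>"
  shows "0 < r_of S"
proof -
  let ?R = "{ereal r | r. r > 0 \<and> (\<forall>x\<in>S. \<forall>g. path g \<and> pathfinish g = pathstart g \<and>
      path_image g \<subseteq> {z\<in>S. dist x z < r} \<longrightarrow> homotopic_loops S g (\<lambda>t. pathstart g))}"
  have "?R \<noteq> {}"
  proof
    assume empty: "?R = {}"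
    have "r_of S = Sup ?R"
      unfolding r_of_def ..
    also have "\<dots> = -\<infinity>"
      unfolding empty by (simp add: bot_ereal_def)
    finally show False
      using assms by simp
  qed
  then obtain x where x: "x \<in> ?R"
    unfolding ex_in_conv[symmetric] by (elim exE) (rule that)
  then have "0 < x"
    by auto
  moreover have "x \<le> r_of S"
    unfolding r_of_def using x by (rule Sup_upper)
  ultimately show ?thesis
    by (rule less_le_trans)
qed

text \<open>Some metric on the disjoint union extending the two given ones, so that the infimum in
  the definition of the Gromov--Hausdorff distance is taken over a nonempty set.\<close>

definition glued_dist :: "'a::metric_space \<Rightarrow> 'b::metric_space \<Rightarrow> 'a + 'b \<Rightarrow> 'a + 'b \<Rightarrow> real" where
  "glued_dist x0 y0 u v = (case (u, v) of
      (Inl x, Inl x') \<Rightarrow> dist x x'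
    | (Inr y, Inr y') \<Rightarrow> dist y y'
    | (Inl x, Inr y) \<Rightarrow> dist x x0 + 1 + dist y0 y
    | (Inr y, Inl x) \<Rightarrow> dist x x0 + 1 + dist y0 y)"

lemma Metric_space_glued_dist: "Metric_space M (glued_dist x0 y0)"
proof
  show "0 \<le> glued_dist x0 y0 u v" for u v
    by (cases u; cases v) (auto simp: glued_dist_def)
  show "glued_dist x0 y0 u v = glued_dist x0 y0 v u" for u v
    by (cases u; cases v) (auto simp: glued_dist_def dist_commute)
  show "glued_dist x0 y0 u v = 0 \<longleftrightarrow> u = v" for u v
    by (cases u; cases v) (auto simp: glued_dist_def add_nonneg_eq_0_iff)
  show "glued_dist x0 y0 u w \<le> glued_dist x0 y0 u v + glued_dist x0 y0 v w" for u v w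
    by (cases u; cases v; cases w; simp add: glued_dist_def)
      (smt (verit) dist_triangle dist_commute dist_nz)+
qed

lemma hausdorff_dist_wrt_lessD:
  assumes h: "hausdorff_dist_wrt d A B < h" and nonempty: "A \<noteq> {}" "B \<noteq> {}"
    and nonneg: "\<And>x y. 0 \<le> d x y"
    and bdd: "bdd_above ((\<lambda>x. INF y\<in>B. d x y) ` A)" "bdd_above ((\<lambda>y. INF x\<in>A. d x y) ` B)"
  shows "\<forall>x\<in>A. \<exists>y\<in>B. d x y < h" "\<forall>y\<in>B. \<exists>x\<in>A. d x y < h"
proof -
  have bdd_below: "bdd_below (d x ` B)" "bdd_below ((\<lambda>x. d x y) ` A)" for x y
    using nonneg by (auto intro: bdd_belowI[of _ 0])
  show "\<forall>x\<in>A. \<exists>y\<in>B. d x y < h"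
  proof
    fix x assume "x \<in> A"
    then have "(INF y\<in>B. d x y) \<le> (SUP x\<in>A. INF y\<in>B. d x y)"
      using bdd(1) by (rule cSUP_upper)
    then have "(INF y\<in>B. d x y) < h"
      using h unfolding hausdorff_dist_wrt_def by linarith
    then show "\<exists>y\<in>B. d x y < h"
      using cInf_lessD[of "d x ` B"] nonempty(2) by blast
  qed
  show "\<forall>y\<in>B. \<exists>x\<in>A. d x y < h"
  proof
    fix y assume "y \<in> B"
    then have "(INF x\<in>A. d x y) \<le> (SUP y\<in>B. INF x\<in>A. d x y)"
      using bdd(2) by (rule cSUP_upper)
    then have "(INF x\<in>A. d x y) < h"
      using h unfolding hausdorff_dist_wrt_def by linarith
    then show "\<exists>x\<in>A. d x y < h"
      using cInf_lessD[of "(\<lambda>x. d x y) ` A"] nonempty(1) by blast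
  qed
qed

lemma (in Metric_space) bdd_above_INF:
  assumes "A \<subseteq> M" "B \<subseteq> M" "a0 \<in> A" "b0 \<in> B" "\<And>a. a \<in> A \<Longrightarrow> d a0 a \<le> R"
  shows "bdd_above ((\<lambda>a. INF b\<in>B. d a b) ` A)"
proof (rule bdd_aboveI)
  fix z assume "z \<in> (\<lambda>a. INF b\<in>B. d a b) ` A"
  then obtain a where a: "a \<in> A" "z = (INF b\<in>B. d a b)"
    by blast
  have "(INF b\<in>B. d a b) \<le> d a b0"
    using assms(4) by (intro cINF_lower bdd_belowI[of _ 0]) auto
  also have "\<dots> \<le> d a a0 + d a0 b0"
    using a assms by (intro triangle) auto
  also have "d a a0 \<le> R"
    using assms(5)[OF a(1)] commute by simp
  finally show "z \<le> R + d a0 b0"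
    using a by simp
qed

lemma GH_dist_lessE:
  fixes X :: "'a::metric_space set" and Y :: "'b::metric_space set"
  assumes "GH_dist X Y < h" "x0 \<in> X" "y0 \<in> Y"
  obtains d where "Metric_space (Inl ` X \<union> Inr ` Y) d"
    "\<forall>x\<in>X. \<forall>x'\<in>X. d (Inl x) (Inl x') = dist x x'" "\<forall>y\<in>Y. \<forall>y'\<in>Y. d (Inr y) (Inr y') = dist y y'"
    "hausdorff_dist_wrt d (Inl ` X) (Inr ` Y) < h"
proof -
  let ?M = "Inl ` X \<union> Inr ` Y :: ('a + 'b) set"
  define D where "D = {hausdorff_dist_wrt d (Inl ` X) (Inr ` Y) | d. Metric_space ?M d \<and>
      (\<forall>x\<in>X. \<forall>x'\<in>X. d (Inl x) (Inl x') = dist x x') \<and> (\<forall>y\<in>Y. \<forall>y'\<in>Y. d (Inr y) (Inr y') = dist y y')}"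
  have "hausdorff_dist_wrt (glued_dist x0 y0) (Inl ` X) (Inr ` Y) \<in> D"
    unfolding D_def using Metric_space_glued_dist[of ?M x0 y0]
    by (auto simp: glued_dist_def intro!: exI[of _ "glued_dist x0 y0"])
  moreover have "Inf D < h"
    using assms(1) unfolding GH_dist_def D_def .
  ultimately show ?thesis
    using cInf_lessD[of D h] that unfolding D_def by blast
qed

lemma Metric_space_correspondence:
  fixes X :: "'a::metric_space set" and Y :: "'b::metric_space set"
  assumes "Metric_space (Inl ` X \<union> Inr ` Y) d"
    and dX: "\<forall>x\<in>X. \<forall>x'\<in>X. d (Inl x) (Inl x') = dist x x'"
    and dY: "\<forall>y\<in>Y. \<forall>y'\<in>Y. d (Inr y) (Inr y') = dist y y'"
    and near: "\<forall>x\<in>X. \<exists>y\<in>Y. d (Inl x) (Inr y) < h" "\<forall>y\<in>Y. \<exists>x\<in>X. d (Inl x) (Inr y) < h"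
  shows "correspondence X Y (\<lambda>x y. d (Inl x) (Inr y) < h) (2 * h)"
proof -
  interpret Metric_space "Inl ` X \<union> Inr ` Y" d
    by fact
  have "\<bar>dist x x' - dist y y'\<bar> \<le> 2 * h"
    if xy: "x \<in> X" "x' \<in> X" "y \<in> Y" "y' \<in> Y" "d (Inl x) (Inr y) < h" "d (Inl x') (Inr y') < h"
    for x x' y y'
  proof -
    have "d (Inl x) (Inl x') \<le> d (Inl x) (Inr y) + d (Inr y) (Inr y') + d (Inr y') (Inl x')"
      "d (Inr y) (Inr y') \<le> d (Inr y) (Inl x) + d (Inl x) (Inl x') + d (Inl x') (Inr y')"
      using xy(1-4) triangle[of "Inl x" "Inr y'" "Inl x'"] triangle[of "Inl x" "Inr y" "Inr y'"]
        triangle[of "Inr y" "Inl x'" "Inr y'"] triangle[of "Inr y" "Inl x" "Inl x'"] by auto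
    then show ?thesis
      using xy dX dY commute[of "Inr y" "Inl x"] commute[of "Inr y'" "Inl x'"] by auto
  qed
  then show ?thesis
    unfolding correspondence_def using near by blast
qed

lemma GH_dist_less_imp_correspondence:
  fixes X :: "'a::metric_space set" and Y :: "'b::metric_space set"
  assumes X: "compact X" "x0 \<in> X" and Y: "compact Y" "y0 \<in> Y" and h: "GH_dist X Y < h"
  shows "\<exists>C. correspondence X Y C (2 * h)"
proof -
  obtain d where d: "Metric_space (Inl ` X \<union> Inr ` Y) d"
    and dX: "\<forall>x\<in>X. \<forall>x'\<in>X. d (Inl x) (Inl x') = dist x x'"
    and dY: "\<forall>y\<in>Y. \<forall>y'\<in>Y. d (Inr y) (Inr y') = dist y y'"
    and dh: "hausdorff_dist_wrt d (Inl ` X) (Inr ` Y) < h"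
    using GH_dist_lessE[OF h X(2) Y(2)] .
  interpret Metric_space "Inl ` X \<union> Inr ` Y" d
    by (fact d)
  obtain R1 R2 where R1: "\<forall>x\<in>X. dist x0 x \<le> R1" and R2: "\<forall>y\<in>Y. dist y0 y \<le> R2"
    using compact_imp_bounded[OF X(1)] compact_imp_bounded[OF Y(1)] bounded_any_center by metis
  have "bdd_above ((\<lambda>u. INF w\<in>Inr ` Y. d u w) ` Inl ` X)"
    using X(2) Y(2) R1 dX by (intro bdd_above_INF[of _ _ "Inl x0" "Inr y0" R1]) auto
  moreover have "bdd_above ((\<lambda>w. INF u\<in>Inl ` X. d w u) ` Inr ` Y)"
    using X(2) Y(2) R2 dY by (intro bdd_above_INF[of _ _ "Inr y0" "Inl x0" R2]) auto
  then have "bdd_above ((\<lambda>w. INF u\<in>Inl ` X. d u w) ` Inr ` Y)"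
    by (simp add: commute)
  ultimately have "\<forall>x\<in>X. \<exists>y\<in>Y. d (Inl x) (Inr y) < h" "\<forall>y\<in>Y. \<exists>x\<in>X. d (Inl x) (Inr y) < h"
    using hausdorff_dist_wrt_lessD[OF dh _ _ nonneg] X(2) Y(2) by blast+
  then show ?thesis
    using Metric_space_correspondence[OF d dX dY] by blast
qed
lemma GH_scales:
  fixes r1 r2 :: ereal
  assumes r: "0 < r1" "0 < r2" and g: "ereal g \<le> min (r1 / 20) (r2 / 20)"
  obtains \<rho> h \<eta> where "g < h" "0 < \<eta>" "3 * (2 * h) + 4 * \<eta> < \<rho>" "ereal \<rho> < r1" "ereal \<rho> < r2"
proof -
  have "ereal (20 * g) \<le> r" if "ereal g \<le> r / 20" for r :: ereal
    using that by (cases r) auto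
  then have g20: "ereal (20 * g) \<le> min r1 r2"
    using g by simp
  obtain s where s: "0 < s" "20 * g \<le> s" "ereal s \<le> min r1 r2"
  proof (cases "min r1 r2")
    case (real m)
    moreover have "0 < min r1 r2"
      using r by simp
    ultimately have "20 * g \<le> m" "0 < m"
      using g20 by auto
    then show ?thesis
      using that[of m] real by auto
  next
    case PInf
    then show ?thesis
      using that[of "max (20 * g) 1"] by auto
  qed (use r in \<open>auto simp: min_def split: if_splits\<close>)
  \<comment> \<open>6 h + 4 \<eta> = 6 max g 0 + s / 10 \<le> 3 s / 10 + s / 10 < s / 2 = \<rho>\<close>
  show ?thesis
  proof (rule that[of "max g 0 + s / 100" "s / 100" "s / 2"])
    show "ereal (s / 2) < r1" "ereal (s / 2) < r2"
      using s by (auto intro: less_le_trans[of _ "ereal s"])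
  qed (use s in auto)
qed

theorem corollary2p3:
  fixes Y1 :: "'a::metric_space set" and Y2 :: "'b::metric_space set"
  assumes "compact Y1" "semilocally_simply_connected Y1" "length_space Y1"
      and "compact Y2" "semilocally_simply_connected Y2" "length_space Y2"
      and "ereal (GH_dist Y1 Y2) \<le> min (r_of Y1 / 20) (r_of Y2 / 20)"
  shows "\<forall>a\<in>Y1. \<forall>b\<in>Y2. fundamental_group Y1 a \<cong> fundamental_group Y2 b"
proof (intro ballI)
  fix a b assume a: "a \<in> Y1" and b: "b \<in> Y2"
  have "0 < r_of Y1" "0 < r_of Y2"
    using assms(7) by (auto intro!: r_of_pos)
  then obtain \<rho> h \<eta> where h: "GH_dist Y1 Y2 < h" and \<eta>: "0 < \<eta>" and \<rho>: "3 * (2 * h) + 4 * \<eta> < \<rho>"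
    and small: "small_loops_null Y1 \<rho>" "small_loops_null Y2 \<rho>"
    using GH_scales[OF _ _ assms(7)] small_loops_null_r_of by metis
  obtain C where C: "correspondence Y1 Y2 C (2 * h)"
    using GH_dist_less_imp_correspondence[OF assms(1) a assms(4) b h] by blast
  then obtain b' where b': "b' \<in> Y2" "C a b'"
    using a unfolding correspondence_def by blast
  have "fundamental_group Y1 a \<cong> fundamental_group Y2 b'"
    using C a b' length_space_short_path_connected[OF assms(3) \<eta>]
      length_space_short_path_connected[OF assms(6) \<eta>] small \<eta> \<rho>
    by (intro fundamental_group_iso_correspondence)
  moreover obtain c where "path_in Y2 b' b c"
    using length_space_short_path_connected[OF assms(6) zero_less_one] b' b
    unfolding short_path_connected_def by blast
  then have "fundamental_group Y2 b' \<cong> fundamental_group Y2 b"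
    by (rule fundamental_group_change_basepoint)
  ultimately show "fundamental_group Y1 a \<cong> fundamental_group Y2 b"
    by (rule iso_trans)
qed

end
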